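(* Let $G=0$ be an Euler–Lagrange equation, $G=E_u(L)$, and suppose it possesses a Lie point symmetry $X_{\rm p}=\xi^i(x,u)\partial_{x^i}+\eta(x,u)\partial_u$ that is non-variational, with $\mathrm{pr}\,X_{\rm p}(G)=f_{\rm p}G$ for a differential function $f_{\rm p}$. Let $P_{\rm p}=\eta-\xi^iu_i$ be its characteristic. Then $$W=f_{\rm p}+\eta_u+\partial_{x^i}\xi^i$$ satisfies $WG=E_u\big(\mathrm{pr}\,\hat X_{\rm p}(L)\big)=E_u(P_{\rm p}G)$, and $W\not\equiv0$; hence $W$ is a variational integrating factor of $G$. If $W$ is non-constant, then multiplication by $W$ is a non-trivial recursion operator for the symmetries of $G=0$ (i.e. $WP\partial_u$ is a symmetry whenever $P\partial_u$ is).
   Context: Setting: independent variables $x=(x^1,\dots,x^n)$, one dependent variable $u$, $u_i=\partial u/\partial x^i$; summation over repeated indices. Differential functions are smooth functions of $x,u$ and finitely many derivatives of $u$; $D_i$ is the total derivative in $x^i$. $E_u(f)=\sum_J(-1)^{|J|}D_J(\partial f/\partial u_J)$. $\mathrm{pr}$ denotes prolongation of a vector field to jet space; for a characteristic $P$, $\hat X_P=P\partial_u$ and $\mathrm{pr}\,\hat X_P(f)=f'(P)=\sum_J(\partial f/\partial u_J)D_JP$; moreover $\mathrm{pr}\,X_{\rm p}=\mathrm{pr}\,\hat X_{\rm p}+\xi^iD_i$ with $\hat X_{\rm p}=P_{\rm p}\partial_u$. A symmetry $P\partial_u$ of $G=E_u(L)=0$ is variational if $E_u(PG)\equiv0$ (equivalently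 $\mathrm{pr}\,\hat X_P(L)$ is a total divergence). A variational integrating factor of $G$ is a differential function $W\not\equiv0$ with $WG=E_u(\tilde L)$ for some $\tilde L$. *)

theory Defs
  imports "HOL-Analysis.Analysis" "HOL-Library.Multiset" "HOL-Library.Groups_Big_Fun"
begin

text \<open>Jet coordinates: Xc i is x^i, Uc J is u_J, where the multi-index J is a
  multiset of indices (Uc {#} is u itself, Uc {#i#} is u_i).  A jet point
  assigns a real value to every coordinate.\<close>

datatype coord = Xc nat | Uc "nat multiset"

type_synonym jet = "coord \<Rightarrow> real"

definition valid_mi :: "nat \<Rightarrow> nat multiset \<Rightarrow> bool" where
  "valid_mi n J \<longleftrightarrow> (\<forall>j\<in>#J. j < n)"

definition valid_coord :: "nat \<Rightarrow> coord \<Rightarrow> bool" where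
  "valid_coord n c \<longleftrightarrow> (case c of Xc i \<Rightarrow> i < n | Uc J \<Rightarrow> valid_mi n J)"

definition pd :: "coord \<Rightarrow> (jet \<Rightarrow> real) \<Rightarrow> jet \<Rightarrow> real" where
  "pd c f p = deriv (\<lambda>t. f (p(c := t))) (p c)"

fun pds :: "coord list \<Rightarrow> (jet \<Rightarrow> real) \<Rightarrow> jet \<Rightarrow> real" where
  "pds [] f = f"
| "pds (c # cs) f = pd c (pds cs f)"

definition difffun :: "nat \<Rightarrow> (jet \<Rightarrow> real) \<Rightarrow> bool" where
  "difffun n f \<longleftrightarrow>
     (\<exists>S. finite S \<and> (\<forall>c\<in>S. valid_coord n c) \<and>
          (\<forall>p q. (\<forall>c\<in>S. p c = q c) \<longrightarrow> f p = f q)) \<and>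
     (\<forall>cs. continuous_on UNIV (pds cs f)) \<and>
     (\<forall>cs c p. (\<lambda>t. pds cs f (p(c := t))) differentiable (at (p c)))"

definition pointfun :: "nat \<Rightarrow> (jet \<Rightarrow> real) \<Rightarrow> bool" where
  "pointfun n f \<longleftrightarrow> difffun n f \<and>
     (\<forall>p q. (\<forall>i<n. p (Xc i) = q (Xc i)) \<and> p (Uc {#}) = q (Uc {#}) \<longrightarrow> f p = f q)"

definition Dt :: "nat \<Rightarrow> (jet \<Rightarrow> real) \<Rightarrow> jet \<Rightarrow> real" where
  "Dt i f p = pd (Xc i) f p + Sum_any (\<lambda>J. p (Uc (J + {#i#})) * pd (Uc J) f p)"

definition DJ :: "nat multiset \<Rightarrow> (jet \<Rightarrow> real) \<Rightarrow> jet \<Rightarrow> real" where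
  "DJ J f = foldr Dt (sorted_list_of_multiset J) f"

definition Eu :: "(jet \<Rightarrow> real) \<Rightarrow> jet \<Rightarrow> real" where
  "Eu f p = Sum_any (\<lambda>J. (-1) ^ size J * DJ J (pd (Uc J) f) p)"

text \<open>Prolongation of the evolutionary vector field P d/du: pr hat X_P (f) = f'(P).\<close>

definition prE :: "(jet \<Rightarrow> real) \<Rightarrow> (jet \<Rightarrow> real) \<Rightarrow> jet \<Rightarrow> real" where
  "prE P f p = Sum_any (\<lambda>J. pd (Uc J) f p * DJ J P p)"

text \<open>Prolongation of a point vector field xi^i d/dx^i + eta d/du:
  pr X = pr hat X_P + xi^i D_i, with characteristic P = eta - xi^i u_i.\<close>

definition charac :: "nat \<Rightarrow> (nat \<Rightarrow> jet \<Rightarrow> real) \<Rightarrow> (jet \<Rightarrow> real) \<Rightarrow> jet \<Rightarrow> real" where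
  "charac n xi eta p = eta p - (\<Sum>i<n. xi i p * p (Uc {#i#}))"

definition prX :: "nat \<Rightarrow> (nat \<Rightarrow> jet \<Rightarrow> real) \<Rightarrow> (jet \<Rightarrow> real) \<Rightarrow> (jet \<Rightarrow> real) \<Rightarrow> jet \<Rightarrow> real" where
  "prX n xi eta f p = prE (charac n xi eta) f p + (\<Sum>i<n. xi i p * Dt i f p)"

text \<open>P d/du is a (generalized) symmetry of G = 0: G'(P) vanishes on the
  solution variety, i.e. at every jet point where all D_J G vanish.\<close>

definition evsym :: "nat \<Rightarrow> (jet \<Rightarrow> real) \<Rightarrow> (jet \<Rightarrow> real) \<Rightarrow> bool" where
  "evsym n G P \<longleftrightarrow> difffun n P \<and>
     (\<forall>p. (\<forall>J. valid_mi n J \<longrightarrow> DJ J G p = 0) \<longrightarrow> prE P G p = 0)"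

definition var_int_factor :: "nat \<Rightarrow> (jet \<Rightarrow> real) \<Rightarrow> (jet \<Rightarrow> real) \<Rightarrow> bool" where
  "var_int_factor n W G \<longleftrightarrow> difffun n W \<and> W \<noteq> (\<lambda>p. 0) \<and>
     (\<exists>Lt. difffun n Lt \<and> (\<lambda>p. W p * G p) = Eu Lt)"

end

theory Submission
  imports Defs
begin

text \<open>Write G = E(L) and P = \<eta> - \<xi>^i u_i. Since pr X_p = pr X_P + \<xi>^i D_i, the symmetry
  condition reads G'(P) = f_p G - \<xi>^i D_i G. The Euler operator intertwines evolutionary fields
  up to an adjoint term, E(L'(P)) = G'(P) + P'^*(G), and for a point characteristic
  P'^*(G) = (\<eta>_u + \<partial>_i \<xi>^i) G + \<xi>^i D_i G; hence E(L'(P)) = W G. Integration by parts gives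
  E(L'(P)) = E(P G), which is nonzero because X_p is not variational, so W \<noteq> 0. Finally the
  Helmholtz condition G'(Q) = G'^*(Q), valid for every Euler-Lagrange expression, applied to G and
  to W G = E(L'(P)) shows that W Q is a symmetry whenever Q is.\<close>

section \<open>Partial derivatives on jet space\<close>

definition pd_differentiable :: "(jet \<Rightarrow> real) \<Rightarrow> bool" where
  "pd_differentiable f \<longleftrightarrow> (\<forall>c p. (\<lambda>t. f (p(c := t))) differentiable (at (p c)))"

definition smooth :: "(jet \<Rightarrow> real) \<Rightarrow> bool" where
  "smooth f \<longleftrightarrow> (\<forall>cs. continuous_on UNIV (pds cs f) \<and> pd_differentiable (pds cs f))"

lemma pd_has_real_derivative: "pd_differentiable f \<Longrightarrow>
    ((\<lambda>t. f (p(c := t))) has_real_derivative pd c f (p(c:=t))) (at t)"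
proof -
  assume "pd_differentiable f"
  then have "(\<lambda>s. f ((p(c:=t))(c := s))) differentiable (at ((p(c:=t)) c))"
    unfolding pd_differentiable_def by blast
  then have "(\<lambda>s. f (p(c := s))) differentiable (at t)" by simp
  then have "((\<lambda>s. f (p(c := s))) has_real_derivative deriv (\<lambda>s. f (p(c := s))) t) (at t)"
    using DERIV_deriv_iff_real_differentiable by blast
  moreover have "pd c f (p(c:=t)) = deriv (\<lambda>s. f (p(c := s))) t"
    unfolding pd_def by simp
  ultimately show ?thesis by simp
qed

lemma pd_has_real_derivative_at: "pd_differentiable f \<Longrightarrow>
    ((\<lambda>t. f (p(c := t))) has_real_derivative pd c f p) (at (p c))"
  using pd_has_real_derivative[of f p c "p c"] by simp

lemma pd_eqI: "((\<lambda>t. f (p(c := t))) has_real_derivative D) (at (p c)) \<Longrightarrow> pd c f p = D"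
  unfolding pd_def by (rule DERIV_imp_deriv)

lemma pd_differentiableI: "(\<And>c p. \<exists>D. ((\<lambda>t. f (p(c := t))) has_real_derivative D) (at (p c))) \<Longrightarrow>
    pd_differentiable f"
  unfolding pd_differentiable_def using real_differentiable_def by blast

lemma pd_differentiable_add: "pd_differentiable f \<Longrightarrow> pd_differentiable g \<Longrightarrow>
    pd_differentiable (\<lambda>p. f p + g p)"
  by (rule pd_differentiableI) (use pd_has_real_derivative_at DERIV_add in blast)

lemma pd_add: "pd_differentiable f \<Longrightarrow> pd_differentiable g \<Longrightarrow>
    pd c (\<lambda>p. f p + g p) = (\<lambda>p. pd c f p + pd c g p)"
  by (rule ext, rule pd_eqI) (use pd_has_real_derivative_at DERIV_add in blast)

lemma pd_differentiable_mult: "pd_differentiable f \<Longrightarrow> pd_differentiable g \<Longrightarrow>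
    pd_differentiable (\<lambda>p. f p * g p)"
  by (rule pd_differentiableI) (use pd_has_real_derivative_at DERIV_mult in blast)

lemma pd_mult: "pd_differentiable f \<Longrightarrow> pd_differentiable g \<Longrightarrow>
    pd c (\<lambda>p. f p * g p) = (\<lambda>p. pd c f p * g p + f p * pd c g p)"
proof (rule ext, rule pd_eqI)
  fix p assume "pd_differentiable f" "pd_differentiable g"
  from DERIV_mult[OF pd_has_real_derivative_at[of f p c, OF this(1)] pd_has_real_derivative_at[of g p c, OF this(2)]]
  show "((\<lambda>t. f (p(c := t)) * g (p(c := t))) has_real_derivative pd c f p * g p + f p * pd c g p) (at (p c))"
    by (simp add: algebra_simps)
qed

lemma pd_differentiable_const: "pd_differentiable (\<lambda>p. a)"
  by (rule pd_differentiableI) (use DERIV_const in blast)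

lemma pd_const: "pd c (\<lambda>p. a) = (\<lambda>p. 0)"
  by (rule ext, rule pd_eqI) simp

lemma pd_differentiable_coord: "pd_differentiable (\<lambda>p. p d)"
proof (rule pd_differentiableI)
  fix c p
  show "\<exists>D. ((\<lambda>t. (p(c := t)) d) has_real_derivative D) (at (p c))"
    by (cases "c = d") (auto intro: DERIV_ident DERIV_const)
qed

lemma pd_coord: "pd c (\<lambda>p. p d) = (\<lambda>p. if c = d then 1 else 0)"
proof (rule ext, rule pd_eqI)
  fix p show "((\<lambda>t. (p(c := t)) d) has_real_derivative (if c = d then 1 else 0)) (at (p c))"
    by (cases "c = d") (auto intro: DERIV_ident DERIV_const)
qed

lemma pd_differentiable_sum: "finite A \<Longrightarrow> (\<And>a. a \<in> A \<Longrightarrow> pd_differentiable (f a)) \<Longrightarrow>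
    pd_differentiable (\<lambda>p. \<Sum>a\<in>A. f a p)"
  by (induction A rule: finite_induct) (auto simp: pd_differentiable_const intro: pd_differentiable_add)

lemma pd_sum: "finite A \<Longrightarrow> (\<And>a. a \<in> A \<Longrightarrow> pd_differentiable (f a)) \<Longrightarrow>
   pd c (\<lambda>p. \<Sum>a\<in>A. f a p) = (\<lambda>p. \<Sum>a\<in>A. pd c (f a) p)"
proof (induction A rule: finite_induct)
  case empty then show ?case by (simp add: pd_const)
next
  case (insert x F)
  then show ?case by (simp add: pd_add pd_differentiable_sum)
qed

lemma pd_differentiable_sum_list: "(\<And>a. a \<in> set xs \<Longrightarrow> pd_differentiable (f a)) \<Longrightarrow>
    pd_differentiable (\<lambda>p. \<Sum>a\<leftarrow>xs. f a p)"
  by (induction xs) (auto simp: pd_differentiable_const intro: pd_differentiable_add)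

lemma pd_sum_list: "(\<And>a. a \<in> set xs \<Longrightarrow> pd_differentiable (f a)) \<Longrightarrow>
   pd c (\<lambda>p. \<Sum>a\<leftarrow>xs. f a p) = (\<lambda>p. \<Sum>a\<leftarrow>xs. pd c (f a) p)"
proof (induction xs)
  case Nil then show ?case by (simp add: pd_const)
next
  case (Cons x xs)
  then show ?case by (simp add: pd_add pd_differentiable_sum_list)
qed

lemma pds_append: "pds (xs @ ys) f = pds xs (pds ys f)"
  by (induction xs) auto

lemma pds_snoc: "pds (cs @ [c]) f = pds cs (pd c f)"
  by (simp add: pds_append)

lemma smooth_pd: "smooth f \<Longrightarrow> smooth (pd c f)"
  unfolding smooth_def by (metis pds_snoc)

lemma smooth_pd_differentiable: "smooth f \<Longrightarrow> pd_differentiable f"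
  unfolding smooth_def using pds.simps(1) by metis

lemma smooth_cont: "smooth f \<Longrightarrow> continuous_on UNIV f"
  unfolding smooth_def using pds.simps(1) by metis

lemma smooth_pds: "smooth f \<Longrightarrow> smooth (pds cs f)"
  by (induction cs) (auto intro: smooth_pd)

lemma pds_add: "(\<And>cs. pd_differentiable (pds cs f)) \<Longrightarrow> (\<And>cs. pd_differentiable (pds cs g)) \<Longrightarrow>
   pds cs (\<lambda>p. f p + g p) = (\<lambda>p. pds cs f p + pds cs g p)"
  by (induction cs) (auto simp: pd_add)

lemma smooth_add: "smooth f \<Longrightarrow> smooth g \<Longrightarrow> smooth (\<lambda>p. f p + g p)"
  unfolding smooth_def
  by (simp add: pds_add pd_differentiable_add continuous_on_add)

lemma pds_const: "pds cs (\<lambda>p. a) = (\<lambda>p. if cs = [] then a else 0)"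
  by (induction cs) (auto simp: pd_const)

lemma smooth_const: "smooth (\<lambda>p. a)"
  unfolding smooth_def by (auto simp: pds_const pd_differentiable_const continuous_on_const)

lemma continuous_on_coord: "continuous_on UNIV (\<lambda>p::jet. p d)"
  by (intro continuous_on_product_coordinates)

lemma pds_coord: "pds cs (\<lambda>p. p d) = (if cs = [] then (\<lambda>p. p d) else if cs = [d] then (\<lambda>p. 1) else (\<lambda>p. 0))"
proof (induction cs)
  case Nil then show ?case by simp
next
  case (Cons c cs)
  show ?case
  proof (cases "cs = []")
    case True then show ?thesis by (auto simp: pd_coord)
  next
    case False then show ?thesis using Cons by (auto simp: pd_const)
  qed
qed

lemma smooth_coord: "smooth (\<lambda>p. p d)"
  unfolding smooth_def by (auto simp: pds_coord pd_differentiable_const pd_differentiable_coord continuous_on_const continuous_on_coord)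

fun leibniz_splits :: "coord list \<Rightarrow> (coord list \<times> coord list) list" where
  "leibniz_splits [] = [([], [])]"
| "leibniz_splits (c # cs) = concat (map (\<lambda>(a, b). [(c # a, b), (a, c # b)]) (leibniz_splits cs))"

lemma sum_list_concat_pairs:
  "(\<Sum>x\<leftarrow>concat (map (\<lambda>(a, b). [F1 a b, F2 a b]) xs). h x) = (\<Sum>(a,b)\<leftarrow>xs. h (F1 a b) + h (F2 a b))"
  by (induction xs) auto

lemma pds_mult: assumes "smooth f" "smooth g"
  shows "pds cs (\<lambda>p. f p * g p) = (\<lambda>p. \<Sum>(a,b)\<leftarrow>leibniz_splits cs. pds a f p * pds b g p)"
proof (induction cs)
  case Nil then show ?case by simp
next
  case (Cons c cs)
  have pd: "\<And>a b. pd_differentiable (\<lambda>p. pds a f p * pds b g p)"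
    using assms by (intro pd_differentiable_mult) (auto intro: smooth_pd_differentiable smooth_pds)
  have "pds (c # cs) (\<lambda>p. f p * g p) = pd c (\<lambda>p. \<Sum>(a,b)\<leftarrow>leibniz_splits cs. pds a f p * pds b g p)"
    using Cons by simp
  also have "\<dots> = (\<lambda>p. \<Sum>ab\<leftarrow>leibniz_splits cs. pd c (\<lambda>p. case ab of (a,b) \<Rightarrow> pds a f p * pds b g p) p)"
    apply (subst pd_sum_list[symmetric])
    using pd by (auto split: prod.splits intro!: arg_cong[where f="pd c"])
  also have "\<dots> = (\<lambda>p. \<Sum>(a,b)\<leftarrow>leibniz_splits (c#cs). pds a f p * pds b g p)"
    apply (rule ext)
    apply (simp only: leibniz_splits.simps sum_list_concat_pairs)
    apply (rule arg_cong[where f=sum_list])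
    apply (rule map_cong[OF refl])
    using assms by (auto simp: pd_mult smooth_pd_differentiable smooth_pds split: prod.splits)
  finally show ?case .
qed

lemma continuous_on_sum_list:
  fixes h :: "'a \<Rightarrow> jet \<Rightarrow> real"
  shows "(\<And>x. x \<in> set xs \<Longrightarrow> continuous_on UNIV (h x)) \<Longrightarrow>
    continuous_on UNIV (\<lambda>p. \<Sum>x\<leftarrow>xs. h x p)"
proof (induction xs)
  case (Cons a xs)
  have 1: "continuous_on UNIV (h a)" using Cons.prems by simp
  have 2: "continuous_on UNIV (\<lambda>p. \<Sum>x\<leftarrow>xs. h x p)" using Cons.IH Cons.prems by simp
  have "continuous_on UNIV (\<lambda>p. h a p + (\<Sum>x\<leftarrow>xs. h x p))"
    using continuous_on_add[OF 1 2] by simp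
  then show ?case by simp
qed (simp add: continuous_on_const)

lemma smooth_mult: assumes "smooth f" "smooth g" shows "smooth (\<lambda>p. f p * g p)"
  unfolding smooth_def
proof
  fix cs
  have c: "\<And>a b. continuous_on UNIV (\<lambda>p. pds a f p * pds b g p)"
    using assms by (intro continuous_on_mult) (auto simp: smooth_def)
  have d: "\<And>a b. pd_differentiable (\<lambda>p. pds a f p * pds b g p)"
    using assms by (intro pd_differentiable_mult) (auto simp: smooth_def)
  have "continuous_on UNIV (\<lambda>p. \<Sum>(a,b)\<leftarrow>leibniz_splits cs. pds a f p * pds b g p)"
    by (rule continuous_on_sum_list) (use c in \<open>auto split: prod.splits\<close>)
  moreover have "pd_differentiable (\<lambda>p. \<Sum>(a,b)\<leftarrow>leibniz_splits cs. pds a f p * pds b g p)"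
    by (rule pd_differentiable_sum_list) (use d in \<open>auto split: prod.splits\<close>)
  ultimately show "continuous_on UNIV (pds cs (\<lambda>p. f p * g p)) \<and> pd_differentiable (pds cs (\<lambda>p. f p * g p))"
    by (simp add: pds_mult assms)
qed

lemma smooth_sum: "finite A \<Longrightarrow> (\<And>a. a \<in> A \<Longrightarrow> smooth (f a)) \<Longrightarrow> smooth (\<lambda>p. \<Sum>a\<in>A. f a p)"
  by (induction A rule: finite_induct) (auto simp: smooth_const intro: smooth_add)

lemma pd_cmult: "pd_differentiable f \<Longrightarrow> pd c (\<lambda>p. a * f p) = (\<lambda>p. a * pd c f p)"
  by (simp add: pd_mult pd_differentiable_const pd_const)

lemma pd_minus: "pd_differentiable f \<Longrightarrow> pd c (\<lambda>p. - f p) = (\<lambda>p. - pd c f p)"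
  using pd_cmult[of f c "-1"] by simp

lemma pd_diff: "pd_differentiable f \<Longrightarrow> pd_differentiable g \<Longrightarrow>
    pd c (\<lambda>p. f p - g p) = (\<lambda>p. pd c f p - pd c g p)"
proof -
  assume a: "pd_differentiable f" "pd_differentiable g"
  have b: "pd_differentiable (\<lambda>p. - g p)" using pd_differentiable_mult[OF pd_differentiable_const a(2), of "-1"] by simp
  show ?thesis using pd_add[OF a(1) b, of c] pd_minus[OF a(2), of c] by simp
qed

lemma second_difference_mvt:
  fixes A :: "real \<Rightarrow> real \<Rightarrow> real" and g :: "real \<Rightarrow> real \<Rightarrow> real"
  assumes gs: "\<And>s t. ((\<lambda>x. g x t) has_real_derivative gs s t) (at s)"
    and gts: "\<And>s t. ((\<lambda>y. gs s y) has_real_derivative A s t) (at t)"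
    and h: "h > 0"
  shows "\<exists>\<xi> \<tau>. s0 < \<xi> \<and> \<xi> < s0 + h \<and> t0 < \<tau> \<and> \<tau> < t0 + h \<and>
     g (s0+h) (t0+h) - g (s0+h) t0 - g s0 (t0+h) + g s0 t0 = h * h * A \<xi> \<tau>"
proof -
  have "\<exists>z. s0 < z \<and> z < s0 + h \<and>
     ((\<lambda>x. g x (t0+h) - g x t0) (s0+h) - (\<lambda>x. g x (t0+h) - g x t0) s0 = ((s0+h) - s0) * (gs z (t0+h) - gs z t0))"
    by (rule MVT2) (use h in \<open>auto intro!: DERIV_diff gs\<close>)
  then obtain \<xi> where x: "s0 < \<xi>" "\<xi> < s0 + h"
    and e1: "g (s0+h) (t0+h) - g (s0+h) t0 - (g s0 (t0+h) - g s0 t0) = h * (gs \<xi> (t0+h) - gs \<xi> t0)"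
    by auto
  have "\<exists>z. t0 < z \<and> z < t0 + h \<and> (gs \<xi> (t0+h) - gs \<xi> t0 = ((t0+h) - t0) * A \<xi> z)"
    by (rule MVT2) (use h gts in auto)
  then obtain \<tau> where y: "t0 < \<tau>" "\<tau> < t0 + h" and e2: "gs \<xi> (t0+h) - gs \<xi> t0 = h * A \<xi> \<tau>"
    by auto
  show ?thesis
    by (rule exI[of _ \<xi>], rule exI[of _ \<tau>]) (use x y e1 e2 in \<open>auto simp: algebra_simps\<close>)
qed

lemma schwarz_real:
  fixes A B :: "real \<Rightarrow> real \<Rightarrow> real" and g :: "real \<Rightarrow> real \<Rightarrow> real"
  assumes gs: "\<And>s t. ((\<lambda>x. g x t) has_real_derivative gs s t) (at s)"
    and gts: "\<And>s t. ((\<lambda>y. gs s y) has_real_derivative A s t) (at t)"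
    and gt: "\<And>s t. ((\<lambda>y. g s y) has_real_derivative gt s t) (at t)"
    and gst: "\<And>s t. ((\<lambda>x. gt x t) has_real_derivative B s t) (at s)"
    and cA: "isCont (\<lambda>z. A (fst z) (snd z)) (s0, t0)"
    and cB: "isCont (\<lambda>z. B (fst z) (snd z)) (s0, t0)"
  shows "A s0 t0 = B s0 t0"
proof (rule ccontr)
  assume ne: "A s0 t0 \<noteq> B s0 t0"
  define e where "e = \<bar>A s0 t0 - B s0 t0\<bar> / 2"
  have e: "e > 0" using ne by (simp add: e_def)
  obtain d1 where d1: "d1 > 0" "\<And>z. dist z (s0,t0) < d1 \<Longrightarrow> dist (A (fst z) (snd z)) (A s0 t0) < e"
    using cA e unfolding continuous_at_eps_delta by fastforce
  obtain d2 where d2: "d2 > 0" "\<And>z. dist z (s0,t0) < d2 \<Longrightarrow> dist (B (fst z) (snd z)) (B s0 t0) < e"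
    using cB e unfolding continuous_at_eps_delta by fastforce
  define h where "h = min d1 d2 / 2"
  have h: "h > 0" using d1 d2 by (simp add: h_def)
  have close: "dist (x, y) (s0, t0) < min d1 d2" if "s0 < x" "x < s0 + h" "t0 < y" "y < t0 + h" for x y
  proof -
    have "dist (x, y) (s0, t0) = norm (x - s0, y - t0)" by (simp add: dist_norm)
    also have "\<dots> \<le> norm (x - s0) + norm (y - t0)" by (rule norm_Pair_le)
    also have "\<dots> < min d1 d2" using that h_def by (simp add: min_def split: if_splits)
    finally show ?thesis .
  qed
  obtain \<xi> \<tau> where a: "s0 < \<xi>" "\<xi> < s0 + h" "t0 < \<tau>" "\<tau> < t0 + h"
    and ea: "g (s0+h) (t0+h) - g (s0+h) t0 - g s0 (t0+h) + g s0 t0 = h * h * A \<xi> \<tau>"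
    using second_difference_mvt[OF gs gts h] by blast
  have gs': "\<And>s t. ((\<lambda>x. g t x) has_real_derivative gt t s) (at s)" using gt by blast
  have gts': "\<And>s t. ((\<lambda>y. gt y s) has_real_derivative B t s) (at t)" using gst by blast
  obtain \<tau>' \<xi>' where b: "t0 < \<tau>'" "\<tau>' < t0 + h" "s0 < \<xi>'" "\<xi>' < s0 + h"
    and eb: "g (s0+h) (t0+h) - g s0 (t0+h) - g (s0+h) t0 + g s0 t0 = h * h * B \<xi>' \<tau>'"
    using second_difference_mvt[where g="\<lambda>t s. g s t", OF gs' gts' h, of t0 s0] by blast
  have "A \<xi> \<tau> = B \<xi>' \<tau>'" using ea eb h by (simp add: algebra_simps)
  moreover have "\<bar>A \<xi> \<tau> - A s0 t0\<bar> < e" using d1(2)[of "(\<xi>, \<tau>)"] close[OF a] by (simp add: dist_real_def)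
  moreover have "\<bar>B \<xi>' \<tau>' - B s0 t0\<bar> < e" using d2(2)[of "(\<xi>', \<tau>')"] close[OF b(3,4,1,2)] by (simp add: dist_real_def)
  ultimately show False unfolding e_def by (simp add: abs_if split: if_splits)
qed

lemma continuous_on_fun_upd2: "continuous_on UNIV (\<lambda>z::real\<times>real. p(c := fst z, d := snd z))"
proof (intro continuous_on_coordinatewise_then_product)
  fix i
  show "continuous_on UNIV (\<lambda>x::real\<times>real. (p(c := fst x, d := snd x)) i)"
    by (cases "i = d"; cases "i = c")
       (auto intro!: continuous_on_fst continuous_on_snd continuous_on_id continuous_on_const)
qed

lemma pd_comm: assumes "smooth f" shows "pd c (pd d f) = pd d (pd c f)"
proof (cases "c = d")
  case True then show ?thesis by simp
next
  case False
  show ?thesis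
  proof
    fix p
    define phi :: "real \<Rightarrow> real \<Rightarrow> jet" where "phi = (\<lambda>s t. p(c := s, d := t))"
    have tw: "\<And>s t. (p(d := t))(c := s) = phi s t" "\<And>s t. (p(c := s))(d := t) = phi s t"
      using False by (auto simp: phi_def fun_upd_twist)
    have pf: "pd_differentiable f" "pd_differentiable (pd c f)" "pd_differentiable (pd d f)" using assms by (auto intro: smooth_pd_differentiable smooth_pd)
    have gs: "\<And>s t. ((\<lambda>x. f (phi x t)) has_real_derivative pd c f (phi s t)) (at s)"
      using pd_has_real_derivative[OF pf(1), of "p(d:=_)" c] by (simp add: tw)
    have gts: "\<And>s t. ((\<lambda>y. pd c f (phi s y)) has_real_derivative pd d (pd c f) (phi s t)) (at t)"
      using pd_has_real_derivative[OF pf(2), of "p(c:=_)" d] by (simp add: tw)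
    have gt: "\<And>s t. ((\<lambda>y. f (phi s y)) has_real_derivative pd d f (phi s t)) (at t)"
      using pd_has_real_derivative[OF pf(1), of "p(c:=_)" d] by (simp add: tw)
    have gst: "\<And>s t. ((\<lambda>x. pd d f (phi x t)) has_real_derivative pd c (pd d f) (phi s t)) (at s)"
      using pd_has_real_derivative[OF pf(3), of "p(d:=_)" c] by (simp add: tw)
    have cont: "isCont (\<lambda>z. F (phi (fst z) (snd z))) (p c, p d)" if "continuous_on UNIV F" for F
    proof -
      have "continuous_on UNIV (F \<circ> (\<lambda>z::real\<times>real. p(c := fst z, d := snd z)))"
        by (rule continuous_on_compose[OF continuous_on_fun_upd2])
          (use that continuous_on_subset in blast)
      then show ?thesis unfolding phi_def o_def using continuous_on_eq_continuous_at by blast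
    qed
    have c1: "continuous_on UNIV (pd d (pd c f))" "continuous_on UNIV (pd c (pd d f))"
      using assms by (auto intro: smooth_cont smooth_pd)
    have "pd d (pd c f) (phi (p c) (p d)) = pd c (pd d f) (phi (p c) (p d))"
      by (rule schwarz_real[OF gs gts gt gst cont[OF c1(1)] cont[OF c1(2)]])
    moreover have "phi (p c) (p d) = p" by (simp add: phi_def)
    ultimately show "pd c (pd d f) p = pd d (pd c f) p" by simp
  qed
qed

section \<open>The order of a differential function\<close>

definition depends_on :: "coord set \<Rightarrow> (jet \<Rightarrow> real) \<Rightarrow> bool" where
  "depends_on S f \<longleftrightarrow> (\<forall>p q. (\<forall>c\<in>S. p c = q c) \<longrightarrow> f p = f q)"

definition multi_indices :: "nat \<Rightarrow> nat \<Rightarrow> nat multiset set" where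
  "multi_indices n N = {J. set_mset J \<subseteq> {..<n} \<and> size J \<le> N}"

definition jet_coords :: "nat \<Rightarrow> nat \<Rightarrow> coord set" where
  "jet_coords n N = Xc ` {..<n} \<union> Uc ` multi_indices n N"

definition has_order :: "nat \<Rightarrow> nat \<Rightarrow> (jet \<Rightarrow> real) \<Rightarrow> bool" where
  "has_order n N f \<longleftrightarrow> depends_on (jet_coords n N) f"

lemma finite_multi_indices: "finite (multi_indices n N)"
proof -
  have "multi_indices n N \<subseteq> mset ` {xs. set xs \<subseteq> {..<n} \<and> length xs \<le> N}"
  proof
    fix J assume "J \<in> multi_indices n N"
    moreover obtain xs where "mset xs = J" using ex_mset by blast
    ultimately show "J \<in> mset ` {xs. set xs \<subseteq> {..<n} \<and> length xs \<le> N}"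
      unfolding multi_indices_def by (auto intro!: image_eqI[of _ _ xs])
  qed
  then show ?thesis using finite_lists_length_le[of "{..<n}" N] finite_surj by blast
qed

lemma finite_jet_coords: "finite (jet_coords n N)"
  unfolding jet_coords_def using finite_multi_indices by simp

lemma multi_indices_mono: "N \<le> M \<Longrightarrow> multi_indices n N \<subseteq> multi_indices n M"
  unfolding multi_indices_def by auto

lemma jet_coords_mono: "N \<le> M \<Longrightarrow> jet_coords n N \<subseteq> jet_coords n M"
  unfolding jet_coords_def using multi_indices_mono by blast

lemma depends_on_mono: "S \<subseteq> T \<Longrightarrow> depends_on S f \<Longrightarrow> depends_on T f"
  unfolding depends_on_def by blast

lemma has_order_mono: "N \<le> M \<Longrightarrow> has_order n N f \<Longrightarrow> has_order n M f"
  unfolding has_order_def using jet_coords_mono depends_on_mono by blast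

lemma deriv_constant: "(\<And>t. g t = a) \<Longrightarrow> deriv g x = (0::real)"
proof -
  assume "\<And>t. g t = a"
  then have "g = (\<lambda>t. a)" by auto
  then show ?thesis by (simp add: DERIV_imp_deriv)
qed

lemma pd_independent: "depends_on S f \<Longrightarrow> c \<notin> S \<Longrightarrow> pd c f p = 0"
  unfolding pd_def depends_on_def by (rule deriv_constant[of _ "f p"]) auto

lemma pd_independent_fun: "depends_on S f \<Longrightarrow> c \<notin> S \<Longrightarrow> pd c f = (\<lambda>p. 0)"
  using pd_independent by blast

lemma depends_on_pd: assumes "depends_on S f" shows "depends_on S (pd c f)"
  unfolding depends_on_def
proof (intro allI impI)
  fix p q :: jet assume a: "\<forall>c\<in>S. p c = q c"
  show "pd c f p = pd c f q"
  proof (cases "c \<in> S")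
    case True
    then have "p c = q c" using a by auto
    moreover have "(\<lambda>t. f (p(c:=t))) = (\<lambda>t. f (q(c:=t)))"
      using assms a unfolding depends_on_def by auto
    ultimately show ?thesis unfolding pd_def by simp
  next
    case False then show ?thesis using pd_independent[OF assms] by simp
  qed
qed

lemma depends_on_const: "depends_on S (\<lambda>p. a)" unfolding depends_on_def by simp
lemma depends_on_coord: "c \<in> S \<Longrightarrow> depends_on S (\<lambda>p. p c)" unfolding depends_on_def by simp
lemma depends_on_add: "depends_on S f \<Longrightarrow> depends_on S g \<Longrightarrow> depends_on S (\<lambda>p. f p + g p)"
  unfolding depends_on_def apply (intro allI impI) by (metis (no_types))
lemma depends_on_mult: "depends_on S f \<Longrightarrow> depends_on S g \<Longrightarrow> depends_on S (\<lambda>p. f p * g p)"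
  unfolding depends_on_def apply (intro allI impI) by (metis (no_types))
lemma depends_on_sum: "(\<And>a. a \<in> A \<Longrightarrow> depends_on S (f a)) \<Longrightarrow> depends_on S (\<lambda>p. \<Sum>a\<in>A. f a p)"
  unfolding depends_on_def by (auto intro!: sum.cong)

lemma has_order_pd: "has_order n N f \<Longrightarrow> has_order n N (pd c f)"
  unfolding has_order_def by (rule depends_on_pd)
lemma has_order_const: "has_order n N (\<lambda>p. a)" unfolding has_order_def by (rule depends_on_const)
lemma has_order_add: "has_order n N f \<Longrightarrow> has_order n N g \<Longrightarrow> has_order n N (\<lambda>p. f p + g p)"
  unfolding has_order_def by (rule depends_on_add)
lemma has_order_mult: "has_order n N f \<Longrightarrow> has_order n N g \<Longrightarrow> has_order n N (\<lambda>p. f p * g p)"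
  unfolding has_order_def by (rule depends_on_mult)
lemma has_order_sum: "(\<And>a. a \<in> A \<Longrightarrow> has_order n N (f a)) \<Longrightarrow> has_order n N (\<lambda>p. \<Sum>a\<in>A. f a p)"
  unfolding has_order_def by (rule depends_on_sum)
lemma has_order_coordU: "J \<in> multi_indices n N \<Longrightarrow> has_order n N (\<lambda>p. p (Uc J))"
  unfolding has_order_def jet_coords_def by (rule depends_on_coord) auto
lemma pd_Uc_beyond_order: "has_order n N f \<Longrightarrow> J \<notin> multi_indices n N \<Longrightarrow> pd (Uc J) f = (\<lambda>p. 0)"
  unfolding has_order_def jet_coords_def by (rule pd_independent_fun) auto

lemma difffun_iff: "difffun n f \<longleftrightarrow> smooth f \<and> (\<exists>N. has_order n N f)"
proof
  assume d: "difffun n f"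
  then obtain S where S: "finite S" "\<forall>c\<in>S. valid_coord n c" "depends_on S f"
    unfolding difffun_def depends_on_def by blast
  define N where "N = Max (insert 0 ((\<lambda>c. case c of Uc J \<Rightarrow> size J | Xc _ \<Rightarrow> 0) ` S))"
  have "S \<subseteq> jet_coords n N"
  proof
    fix c assume c: "c \<in> S"
    show "c \<in> jet_coords n N"
    proof (cases c)
      case (Xc i) then show ?thesis using S(2) c by (auto simp: jet_coords_def valid_coord_def)
    next
      case (Uc J)
      have "size J \<le> N" unfolding N_def using c Uc S(1)
        by (intro Max_ge) (auto intro!: image_eqI[of _ _ c])
      moreover have "valid_mi n J" using S(2) c Uc by (force simp: valid_coord_def)
      ultimately show ?thesis using Uc by (auto simp: jet_coords_def valid_mi_def multi_indices_def)
    qed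
  qed
  then have "has_order n N f" unfolding has_order_def using S(3) depends_on_mono by blast
  moreover have "smooth f" using d unfolding difffun_def smooth_def pd_differentiable_def by simp
  ultimately show "smooth f \<and> (\<exists>N. has_order n N f)" by blast
next
  assume "smooth f \<and> (\<exists>N. has_order n N f)"
  then obtain N where "smooth f" "has_order n N f" by blast
  moreover have "\<forall>c\<in>jet_coords n N. valid_coord n c"
    by (auto simp: jet_coords_def valid_coord_def valid_mi_def multi_indices_def)
  ultimately show "difffun n f"
    unfolding difffun_def has_order_def depends_on_def smooth_def pd_differentiable_def
    apply (intro conjI)
      apply (rule exI[of _ "jet_coords n N"])
    using finite_jet_coords by auto
qed

lemma difffun_smooth: "difffun n f \<Longrightarrow> smooth f" using difffun_iff by blast

lemma pointfun_has_order: "pointfun n f \<Longrightarrow> has_order n 0 f"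
  unfolding pointfun_def has_order_def depends_on_def jet_coords_def multi_indices_def by auto

lemma multi_indices_0: "multi_indices n 0 = {{#}}" unfolding multi_indices_def by auto

definition difffun_ord :: "nat \<Rightarrow> nat \<Rightarrow> (jet \<Rightarrow> real) \<Rightarrow> bool" where
  "difffun_ord n N f \<longleftrightarrow> smooth f \<and> has_order n N f"

lemma difffun_ord_smooth: "difffun_ord n N f \<Longrightarrow> smooth f" by (simp add: difffun_ord_def)
lemma difffun_ord_pd_differentiable: "difffun_ord n N f \<Longrightarrow> pd_differentiable f"
  by (simp add: difffun_ord_def smooth_pd_differentiable)
lemma difffun_ord_has_order: "difffun_ord n N f \<Longrightarrow> has_order n N f" by (simp add: difffun_ord_def)
lemma difffun_ord_mono: "difffun_ord n N f \<Longrightarrow> N \<le> M \<Longrightarrow> difffun_ord n M f"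
  by (auto simp: difffun_ord_def intro: has_order_mono)
lemma difffun_ord_add: "difffun_ord n N f \<Longrightarrow> difffun_ord n N g \<Longrightarrow> difffun_ord n N (\<lambda>p. f p + g p)"
  by (simp add: difffun_ord_def smooth_add has_order_add)
lemma difffun_ord_mult: "difffun_ord n N f \<Longrightarrow> difffun_ord n N g \<Longrightarrow> difffun_ord n N (\<lambda>p. f p * g p)"
  by (simp add: difffun_ord_def smooth_mult has_order_mult)
lemma difffun_ord_const: "difffun_ord n N (\<lambda>p. a)"
  by (simp add: difffun_ord_def smooth_const has_order_const)
lemma difffun_ord_cmult: "difffun_ord n N f \<Longrightarrow> difffun_ord n N (\<lambda>p. a * f p)"
  using difffun_ord_mult[OF difffun_ord_const] by blast
lemma difffun_ord_minus: "difffun_ord n N f \<Longrightarrow> difffun_ord n N (\<lambda>p. - f p)"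
  using difffun_ord_cmult[of n N f "-1"] by simp
lemma difffun_ord_diff: "difffun_ord n N f \<Longrightarrow> difffun_ord n N g \<Longrightarrow> difffun_ord n N (\<lambda>p. f p - g p)"
  using difffun_ord_add[of n N f "\<lambda>p. - g p"] difffun_ord_minus by simp
lemma difffun_ord_sum: "finite A \<Longrightarrow> (\<And>a. a \<in> A \<Longrightarrow> difffun_ord n N (f a)) \<Longrightarrow>
    difffun_ord n N (\<lambda>p. \<Sum>a\<in>A. f a p)"
  by (simp add: difffun_ord_def smooth_sum has_order_sum)
lemma difffun_ord_pd: "difffun_ord n N f \<Longrightarrow> difffun_ord n N (pd c f)"
  by (simp add: difffun_ord_def smooth_pd has_order_pd)
lemma difffun_ord_coordU: "J \<in> multi_indices n N \<Longrightarrow> difffun_ord n N (\<lambda>p. p (Uc J))"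
  by (simp add: difffun_ord_def smooth_coord has_order_coordU)
lemma difffun_iff_difffun_ord: "difffun n f \<longleftrightarrow> (\<exists>N. difffun_ord n N f)"
  by (simp add: difffun_iff difffun_ord_def)

lemma multi_indices_add: "J \<in> multi_indices n N \<Longrightarrow> i < n \<Longrightarrow> J + {#i#} \<in> multi_indices n (Suc N)"
  unfolding multi_indices_def by auto
lemma multi_indices_add_mset: "J \<in> multi_indices n N \<Longrightarrow> i < n \<Longrightarrow>
    add_mset i J \<in> multi_indices n (Suc N)"
  unfolding multi_indices_def by auto

lemma sum_multi_indices_shrink: "N \<le> M \<Longrightarrow>
    (\<And>J. J \<in> multi_indices n M \<Longrightarrow> J \<notin> multi_indices n N \<Longrightarrow> g J = 0) \<Longrightarrow>
   sum g (multi_indices n M) = sum g (multi_indices n N)"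
  by (rule sum.mono_neutral_right) (auto simp: finite_multi_indices multi_indices_mono)

lemma Sum_any_multi_indices: "(\<And>J. J \<notin> multi_indices n M \<Longrightarrow> g J = 0) \<Longrightarrow>
    Sum_any g = sum g (multi_indices n M)"
  by (rule Sum_any.expand_superset) (auto simp: finite_multi_indices)

lemma sum_multi_indices_Suc_member: assumes "j < n"
  shows "(\<Sum>J\<in>multi_indices n (Suc N). if j \<in># J then G J else 0) = (\<Sum>K\<in>multi_indices n N. G (K + {#j#}))"
proof -
  have "(\<Sum>J\<in>multi_indices n (Suc N). if j \<in># J then G J else 0) = (\<Sum>J\<in>{J\<in>multi_indices n (Suc N). j \<in># J}. G J)"
    by (simp add: sum.inter_filter finite_multi_indices)
  also have "{J\<in>multi_indices n (Suc N). j \<in># J} = (\<lambda>K. K + {#j#}) ` multi_indices n N"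
  proof (rule set_eqI, rule iffI)
    fix J assume J: "J \<in> {J\<in>multi_indices n (Suc N). j \<in># J}"
    then have "J = (J - {#j#}) + {#j#}" by simp
    moreover have "J - {#j#} \<in> multi_indices n N" using J unfolding multi_indices_def
      by (auto simp: size_Diff_submset dest: in_diffD)
    ultimately show "J \<in> (\<lambda>K. K + {#j#}) ` multi_indices n N" by blast
  next
    fix J assume "J \<in> (\<lambda>K. K + {#j#}) ` multi_indices n N"
    then show "J \<in> {J\<in>multi_indices n (Suc N). j \<in># J}" using assms multi_indices_add by auto
  qed
  also have "(\<Sum>J\<in>(\<lambda>K. K + {#j#}) ` multi_indices n N. G J) = (\<Sum>K\<in>multi_indices n N. G (K + {#j#}))"
    by (subst sum.reindex) (auto simp: inj_on_def)
  finally show ?thesis .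
qed

section \<open>Total derivatives\<close>

lemma Dt_eq_sum: assumes "has_order n N f" "N \<le> M"
  shows "Dt i f = (\<lambda>p. pd (Xc i) f p + (\<Sum>J\<in>multi_indices n M. p (Uc (J + {#i#})) * pd (Uc J) f p))"
proof
  fix p
  have "Sum_any (\<lambda>J. p (Uc (J + {#i#})) * pd (Uc J) f p) = (\<Sum>J\<in>multi_indices n M. p (Uc (J + {#i#})) * pd (Uc J) f p)"
    by (rule Sum_any_multi_indices) (use assms multi_indices_mono pd_Uc_beyond_order in fastforce)
  then show "Dt i f p = pd (Xc i) f p + (\<Sum>J\<in>multi_indices n M. p (Uc (J + {#i#})) * pd (Uc J) f p)"
    by (simp add: Dt_def)
qed

lemma difffun_ord_Dt: assumes "difffun_ord n N f" "i < n" shows "difffun_ord n (Suc N) (Dt i f)"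
proof -
  have "difffun_ord n (Suc N) (\<lambda>p. pd (Xc i) f p + (\<Sum>J\<in>multi_indices n N. p (Uc (J + {#i#})) * pd (Uc J) f p))"
    using assms
    by (intro difffun_ord_add difffun_ord_sum difffun_ord_mult difffun_ord_coordU)
       (auto simp: finite_multi_indices multi_indices_add_mset intro: difffun_ord_mono difffun_ord_pd)
  then show ?thesis using Dt_eq_sum[OF difffun_ord_has_order[OF assms(1)] order_refl] by simp
qed

lemma Dt_zero: "Dt i (\<lambda>p. 0) = (\<lambda>p. 0)"
  by (rule ext) (simp add: Dt_def pd_const)

lemma Dt_const: "Dt i (\<lambda>p. a) = (\<lambda>p. 0)"
  by (rule ext) (simp add: Dt_def pd_const)

lemma Dt_add: assumes "difffun_ord n N f" "difffun_ord n N g"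
  shows "Dt i (\<lambda>p. f p + g p) = (\<lambda>p. Dt i f p + Dt i g p)"
proof -
  have o: "has_order n N (\<lambda>p. f p + g p)" using assms difffun_ord_add difffun_ord_has_order by blast
  show ?thesis using assms
    by (simp add: Dt_eq_sum[OF o order_refl] Dt_eq_sum[OF difffun_ord_has_order[OF assms(1)] order_refl]
      Dt_eq_sum[OF difffun_ord_has_order[OF assms(2)] order_refl] pd_add difffun_ord_pd_differentiable sum.distrib algebra_simps)
qed

lemma Dt_mult: assumes "difffun_ord n N f" "difffun_ord n N g"
  shows "Dt i (\<lambda>p. f p * g p) = (\<lambda>p. Dt i f p * g p + f p * Dt i g p)"
proof -
  have o: "has_order n N (\<lambda>p. f p * g p)" using assms difffun_ord_mult difffun_ord_has_order by blast
  show ?thesis using assms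
    by (simp add: Dt_eq_sum[OF o order_refl] Dt_eq_sum[OF difffun_ord_has_order[OF assms(1)] order_refl]
      Dt_eq_sum[OF difffun_ord_has_order[OF assms(2)] order_refl] pd_mult difffun_ord_pd_differentiable sum.distrib
      sum_distrib_left sum_distrib_right algebra_simps)
qed

lemma Dt_cmult: assumes "difffun_ord n N f" shows "Dt i (\<lambda>p. a * f p) = (\<lambda>p. a * Dt i f p)"
  using Dt_mult[OF difffun_ord_const[of n N a] assms, of i] by (simp add: Dt_const)

lemma Dt_minus: assumes "difffun_ord n N f" shows "Dt i (\<lambda>p. - f p) = (\<lambda>p. - Dt i f p)"
  using Dt_cmult[OF assms, where a="-1" and i=i] by simp

lemma Dt_sum: assumes "finite A" "\<And>a. a \<in> A \<Longrightarrow> difffun_ord n N (f a)"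
  shows "Dt i (\<lambda>p. \<Sum>a\<in>A. f a p) = (\<lambda>p. \<Sum>a\<in>A. Dt i (f a) p)"
  using assms
proof (induction A rule: finite_induct)
  case empty then show ?case by (simp add: Dt_zero)
next
  case (insert x F)
  have "Dt i (\<lambda>p. \<Sum>a\<in>insert x F. f a p) = Dt i (\<lambda>p. f x p + (\<Sum>a\<in>F. f a p))"
    using insert by simp
  also have "\<dots> = (\<lambda>p. Dt i (f x) p + Dt i (\<lambda>p. \<Sum>a\<in>F. f a p) p)"
    using insert by (intro Dt_add difffun_ord_sum) auto
  finally show ?case using insert by simp
qed

lemma Dt_coordU: "Dt i (\<lambda>p. p (Uc J)) = (\<lambda>p. p (Uc (J + {#i#})))"
proof
  fix p
  have "Sum_any (\<lambda>K. p (Uc (K + {#i#})) * pd (Uc K) (\<lambda>p. p (Uc J)) p) = (\<Sum>K\<in>{J}. p (Uc (K + {#i#})) * pd (Uc K) (\<lambda>p. p (Uc J)) p)"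
    by (rule Sum_any.expand_superset) (auto simp: pd_coord)
  then show "Dt i (\<lambda>p. p (Uc J)) p = p (Uc (J + {#i#}))"
    by (simp add: Dt_def pd_coord)
qed

definition pd_Dt_commutator :: "nat \<Rightarrow> (jet \<Rightarrow> real) \<Rightarrow> coord \<Rightarrow> jet \<Rightarrow> real" where
  "pd_Dt_commutator i f c p = (case c of Uc K \<Rightarrow> if i \<in># K then pd (Uc (K - {#i#})) f p else 0 | Xc j \<Rightarrow> 0)"

lemma sum_pd_coord_shift: assumes "has_order n N f"
  shows "(\<Sum>J\<in>multi_indices n N. (if c = Uc (J + {#i#}) then 1 else 0) * pd (Uc J) f p) = pd_Dt_commutator i f c p"
proof (cases c)
  case (Xc j) then show ?thesis by (simp add: pd_Dt_commutator_def)
next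
  case (Uc K)
  show ?thesis
  proof (cases "i \<in># K")
    case True
    have eq: "\<And>J. (K = J + {#i#}) = (J = K - {#i#})" using True by auto
    have "(\<Sum>J\<in>multi_indices n N. (if c = Uc (J + {#i#}) then 1 else 0) * pd (Uc J) f p)
        = (\<Sum>J\<in>multi_indices n N. if J = K - {#i#} then pd (Uc J) f p else 0)"
      by (rule sum.cong) (use True in \<open>auto simp: Uc eq\<close>)
    also have "\<dots> = (if K - {#i#} \<in> multi_indices n N then pd (Uc (K - {#i#})) f p else 0)"
      by (simp add: sum.delta' finite_multi_indices)
    also have "\<dots> = pd (Uc (K - {#i#})) f p" using pd_Uc_beyond_order[OF assms] by auto
    finally show ?thesis using True Uc by (simp add: pd_Dt_commutator_def)
  next
    case False
    then have "\<And>J. K \<noteq> J + {#i#}" by auto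
    then show ?thesis using False Uc by (simp add: pd_Dt_commutator_def)
  qed
qed

lemma pd_Dt: assumes f: "difffun_ord n N f"
  shows "pd c (Dt i f) = (\<lambda>p. Dt i (pd c f) p + pd_Dt_commutator i f c p)"
proof -
  have o: "has_order n N f" using f difffun_ord_has_order by blast
  have pdf: "\<And>c. pd_differentiable (pd c f)" using f difffun_ord_pd difffun_ord_pd_differentiable by blast
  have pdc: "\<And>J. pd_differentiable (\<lambda>p. p (Uc (J + {#i#})) * pd (Uc J) f p)"
    using pd_differentiable_mult[OF pd_differentiable_coord pdf] by blast
  have "pd c (Dt i f) = pd c (\<lambda>p. pd (Xc i) f p + (\<Sum>J\<in>multi_indices n N. p (Uc (J + {#i#})) * pd (Uc J) f p))"
    using Dt_eq_sum[OF o order_refl] by simp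
  also have "\<dots> = (\<lambda>p. pd c (pd (Xc i) f) p + (\<Sum>J\<in>multi_indices n N. pd c (\<lambda>p. p (Uc (J + {#i#})) * pd (Uc J) f p) p))"
  proof -
    have s: "pd_differentiable (\<lambda>p. \<Sum>J\<in>multi_indices n N. p (Uc (J + {#i#})) * pd (Uc J) f p)"
      by (rule pd_differentiable_sum[OF finite_multi_indices]) (rule pdc)
    have ps: "pd c (\<lambda>p. \<Sum>J\<in>multi_indices n N. p (Uc (J + {#i#})) * pd (Uc J) f p)
        = (\<lambda>p. \<Sum>J\<in>multi_indices n N. pd c (\<lambda>p. p (Uc (J + {#i#})) * pd (Uc J) f p) p)"
      by (rule pd_sum) (auto simp only: finite_multi_indices pdc)
    show ?thesis by (simp only: pd_add[OF pdf s] ps)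
  qed
  also have "\<dots> = (\<lambda>p. pd (Xc i) (pd c f) p + (\<Sum>J\<in>multi_indices n N. p (Uc (J + {#i#})) * pd (Uc J) (pd c f) p)
        + (\<Sum>J\<in>multi_indices n N. (if c = Uc (J + {#i#}) then 1 else 0) * pd (Uc J) f p))"
    using f by (simp add: pd_mult pd_differentiable_coord pdf pd_coord pd_comm difffun_ord_smooth sum.distrib algebra_simps)
  also have "\<dots> = (\<lambda>p. Dt i (pd c f) p + pd_Dt_commutator i f c p)"
    using Dt_eq_sum[OF has_order_pd[OF o] order_refl] sum_pd_coord_shift[OF o] by simp
  finally show ?thesis .
qed

lemma pd_Dt_commutator_Xc: "pd_Dt_commutator i f (Xc j) = (\<lambda>p. 0)"
  by (rule ext) (simp add: pd_Dt_commutator_def)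

lemma pd_Dt_commutator_Uc: "pd_Dt_commutator i f (Uc J) = (\<lambda>p. if i \<in># J then pd (Uc (J - {#i#})) f p else 0)"
  by (rule ext) (simp add: pd_Dt_commutator_def)

lemma Dt_Dt_eq_sum: assumes f: "difffun_ord n N f" and ij: "i < n" "j < n"
  shows "Dt j (Dt i f) = (\<lambda>p. Dt j (pd (Xc i) f) p
    + (\<Sum>J\<in>multi_indices n N. p (Uc (J + {#i#} + {#j#})) * pd (Uc J) f p
        + p (Uc (J + {#i#})) * Dt j (pd (Uc J) f) p))" (is "_ = ?rhs")
proof -
  have dfs: "J \<in> multi_indices n N \<Longrightarrow> difffun_ord n (Suc N) (\<lambda>p. p (Uc (J + {#i#})) * pd (Uc J) f p)"
    for J using f ij by (intro difffun_ord_mult difffun_ord_coordU multi_indices_add)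
      (auto intro: difffun_ord_mono difffun_ord_pd)
  have dfx: "difffun_ord n (Suc N) (pd (Xc i) f)" using f by (auto intro: difffun_ord_mono difffun_ord_pd)
  have summand: "Dt j (\<lambda>p. p (Uc (J + {#i#})) * pd (Uc J) f p)
      = (\<lambda>p. p (Uc (J + {#i#} + {#j#})) * pd (Uc J) f p + p (Uc (J + {#i#})) * Dt j (pd (Uc J) f) p)"
    if J: "J \<in> multi_indices n N" for J
  proof -
    have a: "difffun_ord n (Suc N) (\<lambda>p. p (Uc (J + {#i#})))" using J ij by (intro difffun_ord_coordU multi_indices_add)
    have b: "difffun_ord n (Suc N) (pd (Uc J) f)" using difffun_ord_mono[OF difffun_ord_pd[OF f]] by simp
    show ?thesis using Dt_mult[OF a b, of j] by (simp add: Dt_coordU)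
  qed
  have "Dt j (Dt i f) = Dt j (\<lambda>p. pd (Xc i) f p + (\<Sum>J\<in>multi_indices n N. p (Uc (J + {#i#})) * pd (Uc J) f p))"
    using Dt_eq_sum[OF difffun_ord_has_order[OF f] order_refl] by simp
  also have "\<dots> = (\<lambda>p. Dt j (pd (Xc i) f) p
      + Dt j (\<lambda>p. \<Sum>J\<in>multi_indices n N. p (Uc (J + {#i#})) * pd (Uc J) f p) p)"
    by (rule Dt_add[OF dfx difffun_ord_sum[OF finite_multi_indices dfs]])
  also have "\<dots> = (\<lambda>p. Dt j (pd (Xc i) f) p
      + (\<Sum>J\<in>multi_indices n N. Dt j (\<lambda>p. p (Uc (J + {#i#})) * pd (Uc J) f p) p))"
    by (subst Dt_sum[OF finite_multi_indices dfs]) auto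
  also have "\<dots> = ?rhs"
    using summand by (intro ext arg_cong2[where f="(+)"] refl sum.cong) auto
  finally show ?thesis .
qed

lemma Dt_comm: assumes f: "difffun_ord n N f" and ij: "i < n" "j < n"
  shows "Dt i (Dt j f) = Dt j (Dt i f)"
proof -
  have o: "has_order n N f" using f difffun_ord_has_order by blast
  have dj: "difffun_ord n (Suc N) (Dt j f)" using difffun_ord_Dt f ij by blast
  have L: "Dt i (Dt j f) = (\<lambda>p. Dt j (pd (Xc i) f) p
      + (\<Sum>J\<in>multi_indices n (Suc N). p (Uc (J + {#i#})) * Dt j (pd (Uc J) f) p)
      + (\<Sum>J\<in>multi_indices n (Suc N). if j \<in># J then p (Uc (J + {#i#})) * pd (Uc (J - {#j#})) f p else 0))"
    apply (rule ext)
    apply (simp add: Dt_eq_sum[OF difffun_ord_has_order[OF dj] order_refl, of i] pd_Dt[OF f]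
        pd_Dt_commutator_Xc pd_Dt_commutator_Uc sum.distrib[symmetric])
    by (rule sum.cong) (auto simp: algebra_simps)
  have L2: "(\<Sum>J\<in>multi_indices n (Suc N). p (Uc (J + {#i#})) * Dt j (pd (Uc J) f) p)
        = (\<Sum>J\<in>multi_indices n N. p (Uc (J + {#i#})) * Dt j (pd (Uc J) f) p)" for p
    by (rule sum_multi_indices_shrink) (auto simp: pd_Uc_beyond_order[OF o] Dt_zero)
  have L3: "(\<Sum>J\<in>multi_indices n (Suc N). if j \<in># J then p (Uc (J + {#i#})) * pd (Uc (J - {#j#})) f p else 0)
        = (\<Sum>K\<in>multi_indices n N. p (Uc (K + {#j#} + {#i#})) * pd (Uc K) f p)" for p
    using sum_multi_indices_Suc_member[OF ij(2), where N=N
        and G="\<lambda>J. p (Uc (J + {#i#})) * pd (Uc (J - {#j#})) f p"] by simp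
  show ?thesis
    unfolding L Dt_Dt_eq_sum[OF f ij]
    by (rule ext, subst L2, subst L3) (simp add: sum.distrib add_mset_commute algebra_simps)
qed

lemma difffun_ord_foldr: "set xs \<subseteq> {..<n} \<Longrightarrow> difffun_ord n N f \<Longrightarrow>
    difffun_ord n (N + length xs) (foldr Dt xs f)"
  by (induction xs) (auto intro: difffun_ord_Dt)

lemma foldr_Dt_comm: assumes "i < n" "set xs \<subseteq> {..<n}" "difffun_ord n N f"
  shows "foldr Dt xs (Dt i f) = Dt i (foldr Dt xs f)"
  using assms(2)
proof (induction xs)
  case Nil then show ?case by simp
next
  case (Cons x xs)
  have d: "difffun_ord n (N + length xs) (foldr Dt xs f)" using Cons.prems assms(3) difffun_ord_foldr by auto
  have "foldr Dt (x # xs) (Dt i f) = Dt x (Dt i (foldr Dt xs f))" using Cons by simp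
  also have "\<dots> = Dt i (Dt x (foldr Dt xs f))" using Dt_comm[OF d] Cons.prems assms(1) by simp
  finally show ?case by simp
qed

lemma foldr_Dt_perm: "mset xs = mset ys \<Longrightarrow> set xs \<subseteq> {..<n} \<Longrightarrow> difffun_ord n N f \<Longrightarrow>
    foldr Dt xs f = foldr Dt ys f"
proof (induction xs arbitrary: ys)
  case Nil then show ?case by simp
next
  case (Cons x xs)
  have "x \<in> set ys" using Cons.prems(1) by (metis list.set_intros(1) set_mset_mset)
  then obtain ys1 ys2 where ys: "ys = ys1 @ x # ys2" by (meson split_list)
  have sy: "set ys \<subseteq> {..<n}" using Cons.prems by (metis set_mset_mset)
  have m: "mset xs = mset (ys1 @ ys2)" using Cons.prems(1) ys by simp
  have d2: "difffun_ord n (N + length ys2) (foldr Dt ys2 f)" using difffun_ord_foldr sy ys Cons.prems(3) by auto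
  have "foldr Dt ys f = foldr Dt ys1 (Dt x (foldr Dt ys2 f))" using ys by simp
  also have "\<dots> = Dt x (foldr Dt ys1 (foldr Dt ys2 f))"
    using foldr_Dt_comm[OF _ _ d2, of x ys1] sy ys by auto
  also have "\<dots> = Dt x (foldr Dt (ys1 @ ys2) f)" by simp
  also have "\<dots> = Dt x (foldr Dt xs f)" using Cons.IH[OF m] Cons.prems by simp
  finally show ?case by simp
qed

lemma valid_mi_set: "valid_mi n J \<longleftrightarrow> set_mset J \<subseteq> {..<n}"
  unfolding valid_mi_def by auto

lemma DJ_foldr: assumes "mset xs = J" "valid_mi n J" "difffun_ord n N f" shows "DJ J f = foldr Dt xs f"
proof -
  have "mset (sorted_list_of_multiset J) = mset xs" using assms by simp
  moreover have "set (sorted_list_of_multiset J) \<subseteq> {..<n}" using assms(2) by (simp add: valid_mi_set)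
  ultimately show ?thesis unfolding DJ_def using foldr_Dt_perm assms(3) by blast
qed

lemma DJ_empty[simp]: "DJ {#} f = f" by (simp add: DJ_def)

lemma difffun_ord_DJ: assumes "valid_mi n J" "difffun_ord n N f" shows "difffun_ord n (N + size J) (DJ J f)"
proof -
  have "set (sorted_list_of_multiset J) \<subseteq> {..<n}" using assms(1) by (simp add: valid_mi_set)
  from difffun_ord_foldr[OF this assms(2)] show ?thesis unfolding DJ_def
    by (metis mset_sorted_list_of_multiset size_mset)
qed

lemma DJ_add_mset: assumes "valid_mi n J" "i < n" "difffun_ord n N f"
  shows "DJ (add_mset i J) f = Dt i (DJ J f)"
proof -
  obtain xs where xs: "mset xs = J" using ex_mset by blast
  have v: "valid_mi n (add_mset i J)" using assms by (auto simp: valid_mi_def)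
  have "DJ (add_mset i J) f = foldr Dt (i # xs) f" by (rule DJ_foldr[OF _ v assms(3)]) (simp add: xs)
  also have "\<dots> = Dt i (DJ J f)" using DJ_foldr[OF xs assms(1,3)] by simp
  finally show ?thesis .
qed

lemma DJ_add_mset_Dt: assumes "valid_mi n J" "i < n" "difffun_ord n N f"
  shows "DJ (add_mset i J) f = DJ J (Dt i f)"
proof -
  obtain xs where xs: "mset xs = J" using ex_mset by blast
  have v: "valid_mi n (add_mset i J)" using assms by (auto simp: valid_mi_def)
  have s: "set xs \<subseteq> {..<n}" using xs assms(1) by (auto simp: valid_mi_set)
  have "DJ (add_mset i J) f = foldr Dt (xs @ [i]) f" by (rule DJ_foldr[OF _ v assms(3)]) (simp add: xs)
  also have "\<dots> = DJ J (Dt i f)" using DJ_foldr[OF xs assms(1) difffun_ord_Dt[OF assms(3,2)]] by simp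
  finally show ?thesis .
qed

lemma DJ_lin: assumes "valid_mi n J" "difffun_ord n N f" "difffun_ord n N g"
  shows "DJ J (\<lambda>p. a * f p + b * g p) = (\<lambda>p. a * DJ J f p + b * DJ J g p)"
  using assms(1)
proof (induction J)
  case empty then show ?case by simp
next
  case (add x M)
  have v: "valid_mi n M" "x < n" using add.prems by (auto simp: valid_mi_def)
  have d: "difffun_ord n N (\<lambda>p. a * f p + b * g p)" using assms by (intro difffun_ord_add difffun_ord_cmult)
  have df1: "difffun_ord n (N + size M) (DJ M f)" "difffun_ord n (N + size M) (DJ M g)"
    using difffun_ord_DJ v assms by blast+
  have "DJ (add_mset x M) (\<lambda>p. a * f p + b * g p) = Dt x (\<lambda>p. a * DJ M f p + b * DJ M g p)"
    using DJ_add_mset[OF v d] add.IH[OF v(1)] by simp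
  also have "\<dots> = (\<lambda>p. a * Dt x (DJ M f) p + b * Dt x (DJ M g) p)"
    using Dt_add[OF difffun_ord_cmult[OF df1(1)] difffun_ord_cmult[OF df1(2)], of x a b] Dt_cmult[OF df1(1)] Dt_cmult[OF df1(2)]
    by simp
  finally show ?case using DJ_add_mset[OF v assms(2)] DJ_add_mset[OF v assms(3)] by simp
qed

lemma DJ_add: assumes "valid_mi n J" "difffun_ord n N f" "difffun_ord n N g"
  shows "DJ J (\<lambda>p. f p + g p) = (\<lambda>p. DJ J f p + DJ J g p)"
  using DJ_lin[OF assms, of 1 1] by simp

lemma DJ_cmult: assumes "valid_mi n J" "difffun_ord n N f"
  shows "DJ J (\<lambda>p. a * f p) = (\<lambda>p. a * DJ J f p)"
  using DJ_lin[OF assms assms(2), of a 0] by simp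

lemma DJ_minus: assumes "valid_mi n J" "difffun_ord n N f"
  shows "DJ J (\<lambda>p. - f p) = (\<lambda>p. - DJ J f p)"
  using DJ_cmult[OF assms, of "-1"] by simp

lemma DJ_zero: "DJ J (\<lambda>p. 0) = (\<lambda>p. 0)"
proof -
  have "\<And>xs. foldr Dt xs (\<lambda>p. 0) = (\<lambda>p. 0)"
    by (induct_tac xs) (auto simp: Dt_zero)
  then show ?thesis by (simp add: DJ_def)
qed

lemma DJ_sum: assumes "valid_mi n J" "finite A" "\<And>a. a \<in> A \<Longrightarrow> difffun_ord n N (f a)"
  shows "DJ J (\<lambda>p. \<Sum>a\<in>A. f a p) = (\<lambda>p. \<Sum>a\<in>A. DJ J (f a) p)"
  using assms(2,3)
proof (induction A rule: finite_induct)
  case empty then show ?case by (simp add: DJ_zero)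
next
  case (insert x F)
  have "DJ J (\<lambda>p. \<Sum>a\<in>insert x F. f a p) = DJ J (\<lambda>p. f x p + (\<Sum>a\<in>F. f a p))"
    using insert by simp
  also have "\<dots> = (\<lambda>p. DJ J (f x) p + DJ J (\<lambda>p. \<Sum>a\<in>F. f a p) p)"
    using insert by (intro DJ_add[OF assms(1)] difffun_ord_sum) auto
  finally show ?case using insert by simp
qed

lemma DJ_Dt: assumes "valid_mi n J" "i < n" "difffun_ord n N f"
  shows "DJ J (Dt i f) = DJ (J + {#i#}) f"
  using DJ_add_mset_Dt[OF assms] by simp

section \<open>Euler operator, linearization and its adjoint\<close>

text \<open>lin_adjoint a b is a'^*(b): the formal adjoint of the linearization of a, applied to b.\<close>

definition lin_adjoint :: "(jet \<Rightarrow> real) \<Rightarrow> (jet \<Rightarrow> real) \<Rightarrow> jet \<Rightarrow> real" where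
  "lin_adjoint a b p = Sum_any (\<lambda>J. (-1) ^ size J * DJ J (\<lambda>q. pd (Uc J) a q * b q) p)"

lemma multi_indices_valid: "J \<in> multi_indices n M \<Longrightarrow> valid_mi n J"
  unfolding multi_indices_def valid_mi_def by auto

lemma multi_indices_size: "J \<in> multi_indices n M \<Longrightarrow> size J \<le> M"
  unfolding multi_indices_def by auto

lemma Eu_eq_sum: assumes "difffun_ord n N F" "N \<le> M"
  shows "Eu F = (\<lambda>p. \<Sum>J\<in>multi_indices n M. (-1) ^ size J * DJ J (pd (Uc J) F) p)"
proof
  fix p
  show "Eu F p = (\<Sum>J\<in>multi_indices n M. (-1) ^ size J * DJ J (pd (Uc J) F) p)"
    unfolding Eu_def
  proof (rule Sum_any_multi_indices)
    fix J assume "J \<notin> multi_indices n M"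
    then have "J \<notin> multi_indices n N" using multi_indices_mono assms(2) by blast
    then show "(-1) ^ size J * DJ J (pd (Uc J) F) p = 0"
      using pd_Uc_beyond_order[OF difffun_ord_has_order[OF assms(1)]] by (simp add: DJ_zero)
  qed
qed

lemma prE_eq_sum: assumes "difffun_ord n N F" "N \<le> M"
  shows "prE Q F = (\<lambda>p. \<Sum>J\<in>multi_indices n M. pd (Uc J) F p * DJ J Q p)"
proof
  fix p
  show "prE Q F p = (\<Sum>J\<in>multi_indices n M. pd (Uc J) F p * DJ J Q p)"
    unfolding prE_def
  proof (rule Sum_any_multi_indices)
    fix J assume "J \<notin> multi_indices n M"
    then have "J \<notin> multi_indices n N" using multi_indices_mono assms(2) by blast
    then show "pd (Uc J) F p * DJ J Q p = 0"
      using pd_Uc_beyond_order[OF difffun_ord_has_order[OF assms(1)]] by simp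
  qed
qed

lemma lin_adjoint_eq_sum: assumes "difffun_ord n N a" "N \<le> M"
  shows "lin_adjoint a b = (\<lambda>p. \<Sum>J\<in>multi_indices n M. (-1) ^ size J * DJ J (\<lambda>q. pd (Uc J) a q * b q) p)"
proof
  fix p
  show "lin_adjoint a b p = (\<Sum>J\<in>multi_indices n M. (-1) ^ size J * DJ J (\<lambda>q. pd (Uc J) a q * b q) p)"
    unfolding lin_adjoint_def
  proof (rule Sum_any_multi_indices)
    fix J assume "J \<notin> multi_indices n M"
    then have "J \<notin> multi_indices n N" using multi_indices_mono assms(2) by blast
    then show "(-1) ^ size J * DJ J (\<lambda>q. pd (Uc J) a q * b q) p = 0"
      using pd_Uc_beyond_order[OF difffun_ord_has_order[OF assms(1)]] by (simp add: DJ_zero)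
  qed
qed

lemma difffun_ord_Eu: assumes "difffun_ord n N F" shows "difffun_ord n (N + N) (Eu F)"
proof -
  have "difffun_ord n (N + N) (\<lambda>p. \<Sum>J\<in>multi_indices n N. (-1) ^ size J * DJ J (pd (Uc J) F) p)"
  proof (intro difffun_ord_sum finite_multi_indices difffun_ord_cmult)
    fix J assume J: "J \<in> multi_indices n N"
    show "difffun_ord n (N + N) (DJ J (pd (Uc J) F))"
      by (rule difffun_ord_mono[OF difffun_ord_DJ[OF multi_indices_valid[OF J] difffun_ord_pd[OF assms]]])
        (use multi_indices_size[OF J] in simp)
  qed
  then show ?thesis using Eu_eq_sum[OF assms order_refl] by simp
qed

lemma difffun_ord_prE: assumes "difffun_ord n N F" "difffun_ord n K Q" shows "difffun_ord n (K + N) (prE Q F)"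
proof -
  have "difffun_ord n (K + N) (\<lambda>p. \<Sum>J\<in>multi_indices n N. pd (Uc J) F p * DJ J Q p)"
  proof (intro difffun_ord_sum finite_multi_indices difffun_ord_mult)
    fix J assume J: "J \<in> multi_indices n N"
    show "difffun_ord n (K + N) (pd (Uc J) F)" by (rule difffun_ord_mono[OF difffun_ord_pd[OF assms(1)]]) simp
    show "difffun_ord n (K + N) (DJ J Q)"
      by (rule difffun_ord_mono[OF difffun_ord_DJ[OF multi_indices_valid[OF J] assms(2)]])
        (use multi_indices_size[OF J] in simp)
  qed
  then show ?thesis using prE_eq_sum[OF assms(1) order_refl] by simp
qed

lemma Eu_lin: assumes "difffun_ord n N f" "difffun_ord n N g"
  shows "Eu (\<lambda>p. a * f p + b * g p) = (\<lambda>p. a * Eu f p + b * Eu g p)"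
proof -
  have d: "difffun_ord n N (\<lambda>p. a * f p + b * g p)" using assms by (intro difffun_ord_add difffun_ord_cmult)
  have pl: "\<And>J. pd (Uc J) (\<lambda>p. a * f p + b * g p) = (\<lambda>p. a * pd (Uc J) f p + b * pd (Uc J) g p)"
    using assms by (simp add: pd_add pd_cmult difffun_ord_pd_differentiable pd_differentiable_mult pd_differentiable_const)
  have dl: "\<And>J. J \<in> multi_indices n N \<Longrightarrow> DJ J (\<lambda>p. a * pd (Uc J) f p + b * pd (Uc J) g p)
      = (\<lambda>p. a * DJ J (pd (Uc J) f) p + b * DJ J (pd (Uc J) g) p)"
    using assms by (intro DJ_lin multi_indices_valid difffun_ord_pd)
  show ?thesis
    unfolding Eu_eq_sum[OF d order_refl] Eu_eq_sum[OF assms(1) order_refl] Eu_eq_sum[OF assms(2) order_refl]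
    by (rule ext) (simp add: pl dl sum.distrib sum_distrib_left algebra_simps)
qed

lemma Eu_add: assumes "difffun_ord n N f" "difffun_ord n N g"
  shows "Eu (\<lambda>p. f p + g p) = (\<lambda>p. Eu f p + Eu g p)"
  using Eu_lin[OF assms, of 1 1] by simp

lemma Eu_cmult: assumes "difffun_ord n N f" shows "Eu (\<lambda>p. a * f p) = (\<lambda>p. a * Eu f p)"
  using Eu_lin[OF assms assms, of a 0] by simp

lemma Eu_diff: assumes "difffun_ord n N f" "difffun_ord n N g"
  shows "Eu (\<lambda>p. f p - g p) = (\<lambda>p. Eu f p - Eu g p)"
  using Eu_lin[OF assms, of 1 "-1"] by simp

lemma Eu_zero: "Eu (\<lambda>p. 0) = (\<lambda>p. 0)"
  by (rule ext) (simp add: Eu_def pd_const DJ_zero)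

lemma Eu_sum: assumes "finite A" "\<And>a. a \<in> A \<Longrightarrow> difffun_ord n N (f a)"
  shows "Eu (\<lambda>p. \<Sum>a\<in>A. f a p) = (\<lambda>p. \<Sum>a\<in>A. Eu (f a) p)"
  using assms
proof (induction A rule: finite_induct)
  case empty then show ?case by (simp add: Eu_zero)
next
  case (insert x F)
  have "Eu (\<lambda>p. \<Sum>a\<in>insert x F. f a p) = Eu (\<lambda>p. f x p + (\<Sum>a\<in>F. f a p))"
    using insert by simp
  also have "\<dots> = (\<lambda>p. Eu (f x) p + Eu (\<lambda>p. \<Sum>a\<in>F. f a p) p)"
    using insert by (intro Eu_add difffun_ord_sum) auto
  finally show ?case using insert by simp
qed

lemma prE_lin: assumes "difffun_ord n N f" "difffun_ord n N g"
  shows "prE Q (\<lambda>p. a * f p + b * g p) = (\<lambda>p. a * prE Q f p + b * prE Q g p)"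
proof -
  have d: "difffun_ord n N (\<lambda>p. a * f p + b * g p)" using assms by (intro difffun_ord_add difffun_ord_cmult)
  have pl: "\<And>J. pd (Uc J) (\<lambda>p. a * f p + b * g p) = (\<lambda>p. a * pd (Uc J) f p + b * pd (Uc J) g p)"
    using assms by (simp add: pd_add pd_cmult difffun_ord_pd_differentiable pd_differentiable_mult pd_differentiable_const)
  show ?thesis
    unfolding prE_eq_sum[OF d order_refl] prE_eq_sum[OF assms(1) order_refl] prE_eq_sum[OF assms(2) order_refl]
    by (rule ext) (simp add: pl sum.distrib sum_distrib_left algebra_simps)
qed

lemma prE_add: assumes "difffun_ord n N f" "difffun_ord n N g"
  shows "prE Q (\<lambda>p. f p + g p) = (\<lambda>p. prE Q f p + prE Q g p)"
  using prE_lin[OF assms, of Q 1 1] by simp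

lemma prE_cmult: assumes "difffun_ord n N f" shows "prE Q (\<lambda>p. a * f p) = (\<lambda>p. a * prE Q f p)"
  using prE_lin[OF assms assms, of Q a 0] by simp

lemma prE_zero: "prE Q (\<lambda>p. 0) = (\<lambda>p. 0)"
  by (rule ext) (simp add: prE_def pd_const)

lemma prE_sum: assumes "finite A" "\<And>a. a \<in> A \<Longrightarrow> difffun_ord n N (f a)"
  shows "prE Q (\<lambda>p. \<Sum>a\<in>A. f a p) = (\<lambda>p. \<Sum>a\<in>A. prE Q (f a) p)"
  using assms
proof (induction A rule: finite_induct)
  case empty then show ?case by (simp add: prE_zero)
next
  case (insert x F)
  have "prE Q (\<lambda>p. \<Sum>a\<in>insert x F. f a p) = prE Q (\<lambda>p. f x p + (\<Sum>a\<in>F. f a p))"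
    using insert by simp
  also have "\<dots> = (\<lambda>p. prE Q (f x) p + prE Q (\<lambda>p. \<Sum>a\<in>F. f a p) p)"
    using insert by (intro prE_add difffun_ord_sum) auto
  finally show ?case using insert by simp
qed

lemma lin_adjoint_lin: assumes "difffun_ord n N a" "difffun_ord n N f" "difffun_ord n N g"
  shows "lin_adjoint a (\<lambda>p. c * f p + d * g p) = (\<lambda>p. c * lin_adjoint a f p + d * lin_adjoint a g p)"
proof -
  have dl: "\<And>J. J \<in> multi_indices n N \<Longrightarrow> DJ J (\<lambda>q. pd (Uc J) a q * (c * f q + d * g q))
      = (\<lambda>p. c * DJ J (\<lambda>q. pd (Uc J) a q * f q) p + d * DJ J (\<lambda>q. pd (Uc J) a q * g q) p)"
  proof -
    fix J assume J: "J \<in> multi_indices n N"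
    have "DJ J (\<lambda>q. pd (Uc J) a q * (c * f q + d * g q))
        = DJ J (\<lambda>q. c * (pd (Uc J) a q * f q) + d * (pd (Uc J) a q * g q))"
      by (simp add: algebra_simps)
    also have "\<dots> = (\<lambda>p. c * DJ J (\<lambda>q. pd (Uc J) a q * f q) p + d * DJ J (\<lambda>q. pd (Uc J) a q * g q) p)"
      by (rule DJ_lin[OF multi_indices_valid[OF J] difffun_ord_mult[OF difffun_ord_pd[OF assms(1)] assms(2)] difffun_ord_mult[OF difffun_ord_pd[OF assms(1)] assms(3)]])
    finally show "DJ J (\<lambda>q. pd (Uc J) a q * (c * f q + d * g q))
      = (\<lambda>p. c * DJ J (\<lambda>q. pd (Uc J) a q * f q) p + d * DJ J (\<lambda>q. pd (Uc J) a q * g q) p)" .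
  qed
  show ?thesis
    unfolding lin_adjoint_eq_sum[OF assms(1) order_refl]
  proof (rule ext)
    fix p
    have "(\<Sum>J\<in>multi_indices n N. (-1) ^ size J * DJ J (\<lambda>q. pd (Uc J) a q * (c * f q + d * g q)) p)
       = (\<Sum>J\<in>multi_indices n N. (-1) ^ size J * (c * DJ J (\<lambda>q. pd (Uc J) a q * f q) p + d * DJ J (\<lambda>q. pd (Uc J) a q * g q) p))"
      by (rule sum.cong) (auto simp: dl)
    then show "(\<Sum>J\<in>multi_indices n N. (-1) ^ size J * DJ J (\<lambda>q. pd (Uc J) a q * (c * f q + d * g q)) p) =
         c * (\<Sum>J\<in>multi_indices n N. (-1) ^ size J * DJ J (\<lambda>q. pd (Uc J) a q * f q) p) +
         d * (\<Sum>J\<in>multi_indices n N. (-1) ^ size J * DJ J (\<lambda>q. pd (Uc J) a q * g q) p)"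
      by (simp add: sum.distrib sum_distrib_left algebra_simps)
  qed
qed

lemma lin_adjoint_add: assumes "difffun_ord n N a" "difffun_ord n N f" "difffun_ord n N g"
  shows "lin_adjoint a (\<lambda>p. f p + g p) = (\<lambda>p. lin_adjoint a f p + lin_adjoint a g p)"
  using lin_adjoint_lin[OF assms, of 1 1] by simp

lemma lin_adjoint_zero: "lin_adjoint a (\<lambda>p. 0) = (\<lambda>p. 0)"
  by (rule ext) (simp add: lin_adjoint_def DJ_zero)

lemma lin_adjoint_sum: assumes "difffun_ord n N a" "finite A" "\<And>x. x \<in> A \<Longrightarrow> difffun_ord n N (f x)"
  shows "lin_adjoint a (\<lambda>p. \<Sum>x\<in>A. f x p) = (\<lambda>p. \<Sum>x\<in>A. lin_adjoint a (f x) p)"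
  using assms(2,3)
proof (induction A rule: finite_induct)
  case empty then show ?case by (simp add: lin_adjoint_zero)
next
  case (insert x F)
  have "lin_adjoint a (\<lambda>p. \<Sum>y\<in>insert x F. f y p) = lin_adjoint a (\<lambda>p. f x p + (\<Sum>y\<in>F. f y p))"
    using insert by simp
  also have "\<dots> = (\<lambda>p. lin_adjoint a (f x) p + lin_adjoint a (\<lambda>p. \<Sum>y\<in>F. f y p) p)"
    using insert assms(1) by (intro lin_adjoint_add difffun_ord_sum) auto
  finally show ?case using insert by simp
qed

lemma pd_Uc_Dt: assumes "difffun_ord n N f"
  shows "pd (Uc K) (Dt i f) = (\<lambda>p. Dt i (pd (Uc K) f) p + (if i \<in># K then pd (Uc (K - {#i#})) f p else 0))"
  using pd_Dt[OF assms, of "Uc K" i] by (simp add: pd_Dt_commutator_Uc)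

lemma DJ_pd_Uc_Dt: assumes f: "difffun_ord n N f" and i: "i < n" and K: "valid_mi n K"
  shows "DJ K (pd (Uc K) (Dt i f)) = (\<lambda>p. DJ (K + {#i#}) (pd (Uc K) f) p
           + (if i \<in># K then DJ K (pd (Uc (K - {#i#})) f) p else 0))"
proof (cases "i \<in># K")
  case True
  have a: "difffun_ord n (Suc N) (Dt i (pd (Uc K) f))" using difffun_ord_Dt[OF difffun_ord_pd[OF f] i] .
  have b: "difffun_ord n (Suc N) (pd (Uc (K - {#i#})) f)" using difffun_ord_mono[OF difffun_ord_pd[OF f]] by simp
  have "DJ K (pd (Uc K) (Dt i f)) = DJ K (\<lambda>p. Dt i (pd (Uc K) f) p + pd (Uc (K - {#i#})) f p)"
    using True by (simp add: pd_Uc_Dt[OF f])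
  also have "\<dots> = (\<lambda>p. DJ K (Dt i (pd (Uc K) f)) p + DJ K (pd (Uc (K - {#i#})) f) p)"
    by (rule DJ_add[OF K a b])
  finally show ?thesis using True DJ_Dt[OF K i difffun_ord_pd[OF f]] by simp
next
  case False
  have "DJ K (pd (Uc K) (Dt i f)) = DJ K (Dt i (pd (Uc K) f))"
    using False by (simp add: pd_Uc_Dt[OF f])
  then show ?thesis using False DJ_Dt[OF K i difffun_ord_pd[OF f]] by simp
qed

lemma Eu_Dt_eq_0: assumes f: "difffun_ord n N f" and i: "i < n"
  shows "Eu (Dt i f) = (\<lambda>p. 0)"
proof
  fix p
  have o: "has_order n N f" using f difffun_ord_has_order by blast
  have "Eu (Dt i f) p = (\<Sum>K\<in>multi_indices n (Suc N). (-1) ^ size K * DJ K (pd (Uc K) (Dt i f)) p)"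
    using Eu_eq_sum[OF difffun_ord_Dt[OF f i] order_refl] by simp
  also have "\<dots> = (\<Sum>K\<in>multi_indices n (Suc N). (-1) ^ size K * DJ (K + {#i#}) (pd (Uc K) f) p)
      + (\<Sum>K\<in>multi_indices n (Suc N). if i \<in># K then (-1) ^ size K * DJ K (pd (Uc (K - {#i#})) f) p else 0)"
    unfolding sum.distrib[symmetric]
    by (rule sum.cong) (auto simp: DJ_pd_Uc_Dt[OF f i multi_indices_valid] algebra_simps)
  also have "(\<Sum>K\<in>multi_indices n (Suc N). (-1) ^ size K * DJ (K + {#i#}) (pd (Uc K) f) p)
      = (\<Sum>K\<in>multi_indices n N. (-1) ^ size K * DJ (K + {#i#}) (pd (Uc K) f) p)"
    by (rule sum_multi_indices_shrink) (auto simp: pd_Uc_beyond_order[OF o] DJ_zero)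
  also have "(\<Sum>K\<in>multi_indices n (Suc N). if i \<in># K then (-1) ^ size K * DJ K (pd (Uc (K - {#i#})) f) p else 0)
      = (\<Sum>K\<in>multi_indices n N. (-1) ^ size (K + {#i#}) * DJ (K + {#i#}) (pd (Uc K) f) p)"
    using sum_multi_indices_Suc_member[OF i, where N=N and G="\<lambda>K. (-1) ^ size K * DJ K (pd (Uc (K - {#i#})) f) p"] by simp
  finally show "Eu (Dt i f) p = 0" by (simp add: sum.distrib[symmetric])
qed

lemma Eu_mult_DJ: assumes "valid_mi n J" "difffun_ord n N a" "difffun_ord n N b"
  shows "Eu (\<lambda>p. a p * DJ J b p) = Eu (\<lambda>p. (-1) ^ size J * (DJ J a p * b p))"
  using assms
proof (induction J arbitrary: a N)
  case empty then show ?case by simp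
next
  case (add x M)
  have v: "valid_mi n M" "x < n" using add.prems by (auto simp: valid_mi_def)
  define N' where "N' = N + size M"
  have B: "difffun_ord n N' (DJ M b)" unfolding N'_def by (rule difffun_ord_DJ[OF v(1) add.prems(3)])
  have A: "difffun_ord n N' a" unfolding N'_def by (rule difffun_ord_mono[OF add.prems(2)]) simp
  have AB: "difffun_ord n N' (\<lambda>p. a p * DJ M b p)" by (rule difffun_ord_mult[OF A B])
  have dxa: "difffun_ord n (Suc N') (Dt x a)" by (rule difffun_ord_Dt[OF A v(2)])
  have dB': "difffun_ord n (Suc N') (DJ M b)" by (rule difffun_ord_mono[OF B]) simp
  have b': "difffun_ord n (Suc N') b" by (rule difffun_ord_mono[OF add.prems(3)]) (simp add: N'_def)
  have e1: "(\<lambda>p. a p * DJ (add_mset x M) b p) = (\<lambda>p. Dt x (\<lambda>p. a p * DJ M b p) p - Dt x a p * DJ M b p)"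
    using DJ_add_mset[OF v add.prems(3)] Dt_mult[OF A B, of x] by simp
  have "Eu (\<lambda>p. a p * DJ (add_mset x M) b p) = (\<lambda>p. Eu (Dt x (\<lambda>p. a p * DJ M b p)) p - Eu (\<lambda>p. Dt x a p * DJ M b p) p)"
    unfolding e1
    by (rule Eu_diff[OF difffun_ord_Dt[OF AB v(2)] difffun_ord_mult[OF dxa dB']])
  also have "\<dots> = (\<lambda>p. - Eu (\<lambda>p. Dt x a p * DJ M b p) p)" by (simp add: Eu_Dt_eq_0[OF AB v(2)])
  also have "Eu (\<lambda>p. Dt x a p * DJ M b p) = Eu (\<lambda>p. (-1) ^ size M * (DJ M (Dt x a) p * b p))"
    by (rule add.IH[OF v(1) dxa b'])
  also have "\<dots> = Eu (\<lambda>p. (-1) ^ size M * (DJ (add_mset x M) a p * b p))"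
    using DJ_add_mset_Dt[OF v A] by simp
  also have "\<dots> = (\<lambda>p. (-1) ^ size M * Eu (\<lambda>p. DJ (add_mset x M) a p * b p) p)"
    by (rule Eu_cmult[OF difffun_ord_mult[OF difffun_ord_DJ[OF _ A] difffun_ord_mono[OF add.prems(3)]]])
      (use add.prems in \<open>auto simp: N'_def\<close>)
  finally have "Eu (\<lambda>p. a p * DJ (add_mset x M) b p) = (\<lambda>p. (-1) ^ size (add_mset x M) * Eu (\<lambda>p. DJ (add_mset x M) a p * b p) p)"
    by simp
  also have "\<dots> = Eu (\<lambda>p. (-1) ^ size (add_mset x M) * (DJ (add_mset x M) a p * b p))"
    by (rule Eu_cmult[OF difffun_ord_mult[OF difffun_ord_DJ[OF _ A] difffun_ord_mono[OF add.prems(3)]], symmetric])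
      (use add.prems in \<open>auto simp: N'_def\<close>)
  finally show ?case .
qed

lemma prE_Dt: assumes f: "difffun_ord n N f" and Q: "difffun_ord n N Q" and i: "i < n"
  shows "prE Q (Dt i f) = Dt i (prE Q f)"
proof
  fix p
  have o: "has_order n N f" using f difffun_ord_has_order by blast
  have "prE Q (Dt i f) p = (\<Sum>J\<in>multi_indices n (Suc N). pd (Uc J) (Dt i f) p * DJ J Q p)"
    using prE_eq_sum[OF difffun_ord_Dt[OF f i] order_refl] by simp
  also have "\<dots> = (\<Sum>J\<in>multi_indices n (Suc N). Dt i (pd (Uc J) f) p * DJ J Q p)
     + (\<Sum>J\<in>multi_indices n (Suc N). if i \<in># J then pd (Uc (J - {#i#})) f p * DJ J Q p else 0)"
    unfolding sum.distrib[symmetric]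
    by (rule sum.cong) (auto simp: pd_Uc_Dt[OF f] algebra_simps)
  also have "(\<Sum>J\<in>multi_indices n (Suc N). Dt i (pd (Uc J) f) p * DJ J Q p) = (\<Sum>J\<in>multi_indices n N. Dt i (pd (Uc J) f) p * DJ J Q p)"
    by (rule sum_multi_indices_shrink) (auto simp: pd_Uc_beyond_order[OF o] Dt_zero)
  also have "(\<Sum>J\<in>multi_indices n (Suc N). if i \<in># J then pd (Uc (J - {#i#})) f p * DJ J Q p else 0)
     = (\<Sum>K\<in>multi_indices n N. pd (Uc K) f p * DJ (K + {#i#}) Q p)"
    using sum_multi_indices_Suc_member[OF i, where N=N and G="\<lambda>J. pd (Uc (J - {#i#})) f p * DJ J Q p"] by simp
  finally have L: "prE Q (Dt i f) p = (\<Sum>J\<in>multi_indices n N. Dt i (pd (Uc J) f) p * DJ J Q p)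
     + (\<Sum>K\<in>multi_indices n N. pd (Uc K) f p * DJ (K + {#i#}) Q p)" .
  have dt: "\<And>J. J \<in> multi_indices n N \<Longrightarrow> difffun_ord n (N + N) (\<lambda>p. pd (Uc J) f p * DJ J Q p)"
  proof -
    fix J assume J: "J \<in> multi_indices n N"
    have a: "difffun_ord n (N + N) (pd (Uc J) f)"
      by (rule difffun_ord_mono[OF difffun_ord_pd[OF f]]) simp
    have b: "difffun_ord n (N + N) (DJ J Q)" by (rule difffun_ord_mono[OF difffun_ord_DJ[OF multi_indices_valid[OF J] Q]])
      (use multi_indices_size[OF J] in simp)
    show "difffun_ord n (N + N) (\<lambda>p. pd (Uc J) f p * DJ J Q p)" by (rule difffun_ord_mult[OF a b])
  qed
  have "Dt i (prE Q f) p = Dt i (\<lambda>p. \<Sum>J\<in>multi_indices n N. pd (Uc J) f p * DJ J Q p) p"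
    using prE_eq_sum[OF f order_refl] by simp
  also have "\<dots> = (\<Sum>J\<in>multi_indices n N. Dt i (\<lambda>p. pd (Uc J) f p * DJ J Q p) p)"
    using Dt_sum[OF finite_multi_indices dt] by simp
  also have "\<dots> = (\<Sum>J\<in>multi_indices n N. Dt i (pd (Uc J) f) p * DJ J Q p + pd (Uc J) f p * DJ (J + {#i#}) Q p)"
  proof (rule sum.cong[OF refl])
    fix J assume J: "J \<in> multi_indices n N"
    have a: "difffun_ord n (N + N) (pd (Uc J) f)"
      by (rule difffun_ord_mono[OF difffun_ord_pd[OF f]]) simp
    have b: "difffun_ord n (N + N) (DJ J Q)" by (rule difffun_ord_mono[OF difffun_ord_DJ[OF multi_indices_valid[OF J] Q]])
      (use multi_indices_size[OF J] in simp)
    show "Dt i (\<lambda>p. pd (Uc J) f p * DJ J Q p) p = Dt i (pd (Uc J) f) p * DJ J Q p + pd (Uc J) f p * DJ (J + {#i#}) Q p"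
      using Dt_mult[OF a b, of i] DJ_add_mset[OF multi_indices_valid[OF J] i Q] by simp
  qed
  finally show "prE Q (Dt i f) p = Dt i (prE Q f) p" using L by (simp add: sum.distrib)
qed

lemma prE_DJ: assumes "valid_mi n K" "difffun_ord n N f" "difffun_ord n N Q"
  shows "prE Q (DJ K f) = DJ K (prE Q f)"
  using assms(1)
proof (induction K)
  case empty then show ?case by simp
next
  case (add x M)
  have v: "valid_mi n M" "x < n" using add.prems by (auto simp: valid_mi_def)
  have a: "difffun_ord n (N + size M) (DJ M f)" by (rule difffun_ord_DJ[OF v(1) assms(2)])
  have b: "difffun_ord n (N + size M) Q" by (rule difffun_ord_mono[OF assms(3)]) simp
  have c: "difffun_ord n (N + (N + size M)) (prE Q f)"
    by (rule difffun_ord_mono[OF difffun_ord_prE[OF assms(2,3)]]) simp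
  have "prE Q (DJ (add_mset x M) f) = prE Q (Dt x (DJ M f))" using DJ_add_mset[OF v assms(2)] by simp
  also have "\<dots> = Dt x (prE Q (DJ M f))" by (rule prE_Dt[OF a b v(2)])
  also have "\<dots> = Dt x (DJ M (prE Q f))" using add.IH[OF v(1)] by simp
  also have "\<dots> = DJ (add_mset x M) (prE Q f)" using DJ_add_mset[OF v c] by simp
  finally show ?case .
qed

lemma DJ_pd_Uc_Dt_mult: assumes R: "difffun_ord n N R" and phi: "difffun_ord n N \<phi>" and i: "i < n" and J: "valid_mi n J"
  shows "DJ J (\<lambda>q. pd (Uc J) (Dt i R) q * \<phi> q) = (\<lambda>p. DJ (J + {#i#}) (\<lambda>q. pd (Uc J) R q * \<phi> q) p
     + DJ J (\<lambda>q. pd (Uc J) R q * - Dt i \<phi> q) p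
     + (if i \<in># J then DJ J (\<lambda>q. pd (Uc (J - {#i#})) R q * \<phi> q) p else 0))"
proof -
  define C where "C = (\<lambda>q. if i \<in># J then pd (Uc (J - {#i#})) R q * \<phi> q else 0)"
  have rjp: "difffun_ord n N (\<lambda>q. pd (Uc J) R q * \<phi> q)"
    by (rule difffun_ord_mult[OF difffun_ord_pd[OF R] phi])
  have t1: "difffun_ord n (Suc N) (Dt i (\<lambda>q. pd (Uc J) R q * \<phi> q))"
    by (rule difffun_ord_Dt[OF rjp i])
  have t2: "difffun_ord n (Suc N) (\<lambda>q. pd (Uc J) R q * - Dt i \<phi> q)"
    by (intro difffun_ord_mult difffun_ord_minus difffun_ord_Dt[OF phi i]
        difffun_ord_mono[OF difffun_ord_pd[OF R]]) simp
  have t3: "difffun_ord n (Suc N) C"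
    unfolding C_def using difffun_ord_mult[OF difffun_ord_pd[OF R] phi] difffun_ord_const
    by (cases "i \<in># J") (auto intro: difffun_ord_mono[of n N _ "Suc N"])
  have e: "(\<lambda>q. pd (Uc J) (Dt i R) q * \<phi> q)
      = (\<lambda>q. Dt i (\<lambda>q. pd (Uc J) R q * \<phi> q) q + pd (Uc J) R q * - Dt i \<phi> q + C q)"
    using Dt_mult[OF difffun_ord_pd[OF R] phi, of i] by (auto simp: C_def pd_Uc_Dt[OF R] algebra_simps)
  have "DJ J C = (\<lambda>p. if i \<in># J then DJ J (\<lambda>q. pd (Uc (J - {#i#})) R q * \<phi> q) p else 0)"
    unfolding C_def by (cases "i \<in># J") (simp_all add: DJ_zero)
  then show ?thesis
    unfolding e DJ_add[OF J difffun_ord_add[OF t1 t2] t3] DJ_add[OF J t1 t2] DJ_Dt[OF J i rjp] by simp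
qed

lemma lin_adjoint_Dt: assumes R: "difffun_ord n N R" and phi: "difffun_ord n N \<phi>" and i: "i < n"
  shows "lin_adjoint (Dt i R) \<phi> = lin_adjoint R (\<lambda>p. - Dt i \<phi> p)"
proof
  fix p
  have o: "has_order n N R" using R difffun_ord_has_order by blast
  have "lin_adjoint (Dt i R) \<phi> p = (\<Sum>J\<in>multi_indices n (Suc N). (-1) ^ size J * DJ J (\<lambda>q. pd (Uc J) (Dt i R) q * \<phi> q) p)"
    using lin_adjoint_eq_sum[OF difffun_ord_Dt[OF R i] order_refl] by simp
  also have "\<dots> = (\<Sum>J\<in>multi_indices n (Suc N). (-1) ^ size J * DJ (J + {#i#}) (\<lambda>q. pd (Uc J) R q * \<phi> q) p)
     + (\<Sum>J\<in>multi_indices n (Suc N). (-1) ^ size J * DJ J (\<lambda>q. pd (Uc J) R q * - Dt i \<phi> q) p)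
     + (\<Sum>J\<in>multi_indices n (Suc N). if i \<in># J then (-1) ^ size J * DJ J (\<lambda>q. pd (Uc (J - {#i#})) R q * \<phi> q) p else 0)"
    unfolding sum.distrib[symmetric]
    by (rule sum.cong) (auto simp: DJ_pd_Uc_Dt_mult[OF R phi i multi_indices_valid] distrib_left)
  also have "(\<Sum>J\<in>multi_indices n (Suc N). (-1) ^ size J * DJ (J + {#i#}) (\<lambda>q. pd (Uc J) R q * \<phi> q) p)
     = (\<Sum>J\<in>multi_indices n N. (-1) ^ size J * DJ (J + {#i#}) (\<lambda>q. pd (Uc J) R q * \<phi> q) p)"
    by (rule sum_multi_indices_shrink) (auto simp: pd_Uc_beyond_order[OF o] DJ_zero)
  also have "(\<Sum>J\<in>multi_indices n (Suc N). (-1) ^ size J * DJ J (\<lambda>q. pd (Uc J) R q * - Dt i \<phi> q) p)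
     = (\<Sum>J\<in>multi_indices n N. (-1) ^ size J * DJ J (\<lambda>q. pd (Uc J) R q * - Dt i \<phi> q) p)"
    by (rule sum_multi_indices_shrink) (auto simp: pd_Uc_beyond_order[OF o] DJ_zero)
  also have "(\<Sum>J\<in>multi_indices n (Suc N). if i \<in># J then (-1) ^ size J * DJ J (\<lambda>q. pd (Uc (J - {#i#})) R q * \<phi> q) p else 0)
     = (\<Sum>K\<in>multi_indices n N. (-1) ^ size (K + {#i#}) * DJ (K + {#i#}) (\<lambda>q. pd (Uc K) R q * \<phi> q) p)"
    using sum_multi_indices_Suc_member[OF i, where N=N and G="\<lambda>J. (-1) ^ size J * DJ J (\<lambda>q. pd (Uc (J - {#i#})) R q * \<phi> q) p"] by simp
  finally have "lin_adjoint (Dt i R) \<phi> p = (\<Sum>J\<in>multi_indices n N. (-1) ^ size J * DJ J (\<lambda>q. pd (Uc J) R q * - Dt i \<phi> q) p)"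
    by (simp add: sum.distrib[symmetric])
  also have "\<dots> = lin_adjoint R (\<lambda>p. - Dt i \<phi> p) p" using lin_adjoint_eq_sum[OF R order_refl] by simp
  finally show "lin_adjoint (Dt i R) \<phi> p = lin_adjoint R (\<lambda>p. - Dt i \<phi> p) p" .
qed

lemma lin_adjoint_DJ: assumes "valid_mi n K" "difffun_ord n N Q" "difffun_ord n N \<phi>"
  shows "lin_adjoint (DJ K Q) \<phi> = lin_adjoint Q (\<lambda>p. (-1) ^ size K * DJ K \<phi> p)"
  using assms
proof (induction K arbitrary: \<phi> N)
  case empty then show ?case by simp
next
  case (add x M)
  have v: "valid_mi n M" "x < n" using add.prems by (auto simp: valid_mi_def)
  have a: "difffun_ord n (N + size M) (DJ M Q)" by (rule difffun_ord_DJ[OF v(1) add.prems(2)])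
  have b: "difffun_ord n (N + size M) \<phi>" by (rule difffun_ord_mono[OF add.prems(3)]) simp
  have c: "difffun_ord n (Suc (N + size M)) (\<lambda>p. - Dt x \<phi> p)"
    by (rule difffun_ord_minus[OF difffun_ord_Dt[OF b v(2)]])
  have d: "difffun_ord n (Suc (N + size M)) Q" by (rule difffun_ord_mono[OF add.prems(2)]) simp
  have "lin_adjoint (DJ (add_mset x M) Q) \<phi> = lin_adjoint (Dt x (DJ M Q)) \<phi>" using DJ_add_mset[OF v add.prems(2)] by simp
  also have "\<dots> = lin_adjoint (DJ M Q) (\<lambda>p. - Dt x \<phi> p)" by (rule lin_adjoint_Dt[OF a b v(2)])
  also have "\<dots> = lin_adjoint Q (\<lambda>p. (-1) ^ size M * DJ M (\<lambda>p. - Dt x \<phi> p) p)" by (rule add.IH[OF v(1) d c])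
  also have "DJ M (\<lambda>p. - Dt x \<phi> p) = (\<lambda>p. - DJ (add_mset x M) \<phi> p)"
    using DJ_minus[OF v(1) difffun_ord_Dt[OF b v(2)]] DJ_add_mset_Dt[OF v add.prems(3)] by simp
  finally show ?case by simp
qed

section \<open>Helmholtz conditions\<close>

lemma Eu_mult: assumes a: "difffun_ord n N a" and b: "difffun_ord n N b"
  shows "Eu (\<lambda>p. a p * b p) = (\<lambda>p. lin_adjoint a b p + lin_adjoint b a p)"
proof
  fix p
  have ab: "difffun_ord n N (\<lambda>p. a p * b p)" by (rule difffun_ord_mult[OF a b])
  have "Eu (\<lambda>p. a p * b p) p = (\<Sum>J\<in>multi_indices n N. (-1) ^ size J * DJ J (pd (Uc J) (\<lambda>p. a p * b p)) p)"
    using Eu_eq_sum[OF ab order_refl] by simp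
  also have "\<dots> = (\<Sum>J\<in>multi_indices n N. (-1) ^ size J * DJ J (\<lambda>q. pd (Uc J) a q * b q) p
                    + (-1) ^ size J * DJ J (\<lambda>q. pd (Uc J) b q * a q) p)"
  proof (rule sum.cong[OF refl])
    fix J assume J: "J \<in> multi_indices n N"
    have e: "pd (Uc J) (\<lambda>p. a p * b p) = (\<lambda>q. pd (Uc J) a q * b q + pd (Uc J) b q * a q)"
      using pd_mult[OF difffun_ord_pd_differentiable[OF a] difffun_ord_pd_differentiable[OF b]] by (simp add: mult.commute)
    show "(-1) ^ size J * DJ J (pd (Uc J) (\<lambda>p. a p * b p)) p = (-1) ^ size J * DJ J (\<lambda>q. pd (Uc J) a q * b q) p
                    + (-1) ^ size J * DJ J (\<lambda>q. pd (Uc J) b q * a q) p"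
      unfolding e DJ_add[OF multi_indices_valid[OF J] difffun_ord_mult[OF difffun_ord_pd[OF a] b] difffun_ord_mult[OF difffun_ord_pd[OF b] a]]
      by (simp add: algebra_simps)
  qed
  also have "\<dots> = lin_adjoint a b p + lin_adjoint b a p"
    using lin_adjoint_eq_sum[OF a order_refl, of b] lin_adjoint_eq_sum[OF b order_refl, of a] by (simp add: sum.distrib)
  finally show "Eu (\<lambda>p. a p * b p) p = lin_adjoint a b p + lin_adjoint b a p" .
qed

lemma Eu_prE_eq_Eu_mult: assumes F: "difffun_ord n N F" and Q: "difffun_ord n N Q"
  shows "Eu (prE Q F) = Eu (\<lambda>p. Q p * Eu F p)"
proof -
  have t1: "\<And>K. K \<in> multi_indices n N \<Longrightarrow> difffun_ord n (N + N) (\<lambda>p. pd (Uc K) F p * DJ K Q p)"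
  proof -
    fix K assume K: "K \<in> multi_indices n N"
    show "difffun_ord n (N + N) (\<lambda>p. pd (Uc K) F p * DJ K Q p)"
      by (rule difffun_ord_mult[OF difffun_ord_mono[OF difffun_ord_pd[OF F]] difffun_ord_mono[OF difffun_ord_DJ[OF multi_indices_valid[OF K] Q]]])
         (use multi_indices_size[OF K] in simp_all)
  qed
  have t2: "\<And>K. K \<in> multi_indices n N \<Longrightarrow> difffun_ord n (N + N) (\<lambda>p. (-1) ^ size K * (DJ K (pd (Uc K) F) p * Q p))"
  proof -
    fix K assume K: "K \<in> multi_indices n N"
    show "difffun_ord n (N + N) (\<lambda>p. (-1) ^ size K * (DJ K (pd (Uc K) F) p * Q p))"
      by (rule difffun_ord_cmult[OF difffun_ord_mult[OF difffun_ord_mono[OF difffun_ord_DJ[OF multi_indices_valid[OF K] difffun_ord_pd[OF F]]] difffun_ord_mono[OF Q]]])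
         (use multi_indices_size[OF K] in simp_all)
  qed
  have "Eu (prE Q F) = Eu (\<lambda>p. \<Sum>K\<in>multi_indices n N. pd (Uc K) F p * DJ K Q p)"
    using prE_eq_sum[OF F order_refl] by simp
  also have "\<dots> = (\<lambda>p. \<Sum>K\<in>multi_indices n N. Eu (\<lambda>p. pd (Uc K) F p * DJ K Q p) p)"
    by (rule Eu_sum[OF finite_multi_indices t1])
  also have "\<dots> = (\<lambda>p. \<Sum>K\<in>multi_indices n N. Eu (\<lambda>p. (-1) ^ size K * (DJ K (pd (Uc K) F) p * Q p)) p)"
    by (intro ext sum.cong refl) (simp add: Eu_mult_DJ[OF multi_indices_valid difffun_ord_pd[OF F] Q])
  also have "\<dots> = Eu (\<lambda>p. \<Sum>K\<in>multi_indices n N. (-1) ^ size K * (DJ K (pd (Uc K) F) p * Q p))"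
    by (rule Eu_sum[OF finite_multi_indices t2, symmetric])
  also have "(\<lambda>p. \<Sum>K\<in>multi_indices n N. (-1) ^ size K * (DJ K (pd (Uc K) F) p * Q p)) = (\<lambda>p. Q p * Eu F p)"
    using Eu_eq_sum[OF F order_refl] by (simp add: sum_distrib_left algebra_simps)
  finally show ?thesis .
qed

lemma pd_Uc_prE: assumes F: "difffun_ord n N F" and Q: "difffun_ord n N Q"
  shows "pd (Uc J) (prE Q F) = (\<lambda>q. prE Q (pd (Uc J) F) q
    + (\<Sum>K\<in>multi_indices n N. pd (Uc K) F q * pd (Uc J) (DJ K Q) q))"
proof -
  have DKQ: "K \<in> multi_indices n N \<Longrightarrow> pd_differentiable (DJ K Q)" for K
    by (rule difffun_ord_pd_differentiable[OF difffun_ord_DJ[OF multi_indices_valid Q]])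
  have FK: "pd_differentiable (pd (Uc K) F)" for K
    by (rule difffun_ord_pd_differentiable[OF difffun_ord_pd[OF F]])
  have "pd (Uc J) (prE Q F) = pd (Uc J) (\<lambda>q. \<Sum>K\<in>multi_indices n N. pd (Uc K) F q * DJ K Q q)"
    using prE_eq_sum[OF F order_refl] by simp
  also have "\<dots> = (\<lambda>q. \<Sum>K\<in>multi_indices n N. pd (Uc J) (\<lambda>q. pd (Uc K) F q * DJ K Q q) q)"
    by (rule pd_sum[OF finite_multi_indices pd_differentiable_mult[OF FK DKQ]])
  also have "\<dots> = (\<lambda>q. \<Sum>K\<in>multi_indices n N.
      pd (Uc K) (pd (Uc J) F) q * DJ K Q q + pd (Uc K) F q * pd (Uc J) (DJ K Q) q)"
    by (intro ext sum.cong refl)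
      (simp add: pd_mult[OF FK DKQ] pd_comm[OF difffun_ord_smooth[OF F], of "Uc J"])
  also have "\<dots> = (\<lambda>q. prE Q (pd (Uc J) F) q
      + (\<Sum>K\<in>multi_indices n N. pd (Uc K) F q * pd (Uc J) (DJ K Q) q))"
    using prE_eq_sum[OF difffun_ord_pd[OF F] order_refl] by (simp add: sum.distrib)
  finally show ?thesis .
qed

lemma prE_Eu_eq_sum: assumes F: "difffun_ord n N F" and Q: "difffun_ord n N Q" and "N \<le> M"
  shows "prE Q (Eu F) p = (\<Sum>J\<in>multi_indices n M. (-1) ^ size J * prE Q (DJ J (pd (Uc J) F)) p)"
proof -
  have dJ: "difffun_ord n (N + N) (\<lambda>p. (-1) ^ size J * DJ J (pd (Uc J) F) p)"
    if "J \<in> multi_indices n N" for J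
    using that by (intro difffun_ord_cmult difffun_ord_mono[OF difffun_ord_DJ[OF multi_indices_valid
          difffun_ord_pd[OF F]]]) (auto dest: multi_indices_size)
  have "prE Q (Eu F) p = prE Q (\<lambda>p. \<Sum>J\<in>multi_indices n N. (-1) ^ size J * DJ J (pd (Uc J) F) p) p"
    using Eu_eq_sum[OF F order_refl] by simp
  also have "\<dots> = (\<Sum>J\<in>multi_indices n N. prE Q (\<lambda>p. (-1) ^ size J * DJ J (pd (Uc J) F) p) p)"
    using prE_sum[OF finite_multi_indices dJ] by simp
  also have "\<dots> = (\<Sum>J\<in>multi_indices n N. (-1) ^ size J * prE Q (DJ J (pd (Uc J) F)) p)"
    by (intro sum.cong refl)
      (simp add: prE_cmult[OF difffun_ord_DJ[OF multi_indices_valid difffun_ord_pd[OF F]]])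
  also have "\<dots> = (\<Sum>J\<in>multi_indices n M. (-1) ^ size J * prE Q (DJ J (pd (Uc J) F)) p)"
    by (rule sum_multi_indices_shrink[symmetric])
      (use assms(3) in \<open>auto simp: pd_Uc_beyond_order[OF difffun_ord_has_order[OF F]] DJ_zero prE_zero\<close>)
  finally show ?thesis .
qed

lemma lin_adjoint_Eu_eq_sum: assumes F: "difffun_ord n N F" and Q: "difffun_ord n N Q"
  shows "lin_adjoint Q (Eu F) p = (\<Sum>J\<in>multi_indices n (N + N). \<Sum>K\<in>multi_indices n N.
    (-1) ^ size J * DJ J (\<lambda>q. pd (Uc J) (DJ K Q) q * pd (Uc K) F q) p)"
proof -
  have dK: "difffun_ord n (N + N) (\<lambda>p. (-1) ^ size K * DJ K (pd (Uc K) F) p)"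
    if "K \<in> multi_indices n N" for K
    using that by (intro difffun_ord_cmult difffun_ord_mono[OF difffun_ord_DJ[OF multi_indices_valid
          difffun_ord_pd[OF F]]]) (auto dest: multi_indices_size)
  have DKQ: "K \<in> multi_indices n N \<Longrightarrow> difffun_ord n (N + N) (DJ K Q)" for K
    by (rule difffun_ord_mono[OF difffun_ord_DJ[OF multi_indices_valid Q]]) (auto dest: multi_indices_size)
  have "lin_adjoint Q (Eu F) p
      = lin_adjoint Q (\<lambda>p. \<Sum>K\<in>multi_indices n N. (-1) ^ size K * DJ K (pd (Uc K) F) p) p"
    using Eu_eq_sum[OF F order_refl] by simp
  also have "\<dots> = (\<Sum>K\<in>multi_indices n N. lin_adjoint Q (\<lambda>p. (-1) ^ size K * DJ K (pd (Uc K) F) p) p)"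
    using lin_adjoint_sum[OF difffun_ord_mono[OF Q] finite_multi_indices dK] by simp
  also have "\<dots> = (\<Sum>K\<in>multi_indices n N. lin_adjoint (DJ K Q) (pd (Uc K) F) p)"
    by (intro sum.cong refl)
      (simp add: lin_adjoint_DJ[OF multi_indices_valid Q difffun_ord_pd[OF F]])
  also have "\<dots> = (\<Sum>J\<in>multi_indices n (N + N). \<Sum>K\<in>multi_indices n N.
      (-1) ^ size J * DJ J (\<lambda>q. pd (Uc J) (DJ K Q) q * pd (Uc K) F q) p)"
    by (subst sum.swap) (auto intro!: sum.cong simp: lin_adjoint_eq_sum[OF DKQ order_refl])
  finally show ?thesis .
qed

lemma Eu_prE_eq: assumes F: "difffun_ord n N F" and Q: "difffun_ord n N Q"
  shows "Eu (prE Q F) = (\<lambda>p. prE Q (Eu F) p + lin_adjoint Q (Eu F) p)"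
proof
  fix p
  have DKQ: "K \<in> multi_indices n N \<Longrightarrow> difffun_ord n (N + N) (DJ K Q)" for K
    by (rule difffun_ord_mono[OF difffun_ord_DJ[OF multi_indices_valid Q]]) (auto dest: multi_indices_size)
  have dB: "K \<in> multi_indices n N \<Longrightarrow> difffun_ord n (N + N) (\<lambda>q. pd (Uc K) F q * pd (Uc J) (DJ K Q) q)"
    for J K by (intro difffun_ord_mult difffun_ord_pd DKQ difffun_ord_mono[OF F]) simp_all
  have "(-1) ^ size J * DJ J (pd (Uc J) (prE Q F)) p
      = (-1) ^ size J * prE Q (DJ J (pd (Uc J) F)) p
      + (\<Sum>K\<in>multi_indices n N. (-1) ^ size J * DJ J (\<lambda>q. pd (Uc J) (DJ K Q) q * pd (Uc K) F q) p)"
    if "J \<in> multi_indices n (N + N)" for J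
  proof -
    have v: "valid_mi n J" using multi_indices_valid[OF that] .
    have dA: "difffun_ord n (N + N) (prE Q (pd (Uc J) F))"
      by (rule difffun_ord_prE[OF difffun_ord_pd[OF F] Q])
    have "DJ J (pd (Uc J) (prE Q F)) p = DJ J (prE Q (pd (Uc J) F)) p
        + DJ J (\<lambda>q. \<Sum>K\<in>multi_indices n N. pd (Uc K) F q * pd (Uc J) (DJ K Q) q) p"
      unfolding pd_Uc_prE[OF F Q] using DJ_add[OF v dA difffun_ord_sum[OF finite_multi_indices dB]] by simp
    also have "\<dots> = prE Q (DJ J (pd (Uc J) F)) p
        + (\<Sum>K\<in>multi_indices n N. DJ J (\<lambda>q. pd (Uc K) F q * pd (Uc J) (DJ K Q) q) p)"
      using prE_DJ[OF v difffun_ord_pd[OF F] Q] DJ_sum[OF v finite_multi_indices dB] by simp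
    finally show ?thesis by (simp add: distrib_left sum_distrib_left mult.commute)
  qed
  then have "Eu (prE Q F) p = (\<Sum>J\<in>multi_indices n (N + N). (-1) ^ size J * prE Q (DJ J (pd (Uc J) F)) p)
     + (\<Sum>J\<in>multi_indices n (N + N). \<Sum>K\<in>multi_indices n N.
        (-1) ^ size J * DJ J (\<lambda>q. pd (Uc J) (DJ K Q) q * pd (Uc K) F q) p)"
    using Eu_eq_sum[OF difffun_ord_prE[OF F Q] order_refl] by (simp add: sum.distrib[symmetric])
  then show "Eu (prE Q F) p = prE Q (Eu F) p + lin_adjoint Q (Eu F) p"
    using prE_Eu_eq_sum[OF F Q, of "N + N"] lin_adjoint_Eu_eq_sum[OF F Q] by simp
qed

lemma helmholtz_self_adjoint: assumes F: "difffun_ord n N F" and Q: "difffun_ord n N Q"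
  shows "prE Q (Eu F) = lin_adjoint (Eu F) Q"
proof
  fix p
  have EF: "difffun_ord n (N + N) (Eu F)" by (rule difffun_ord_Eu[OF F])
  have Q2: "difffun_ord n (N + N) Q" by (rule difffun_ord_mono[OF Q]) simp
  have "Eu (prE Q F) p = Eu (\<lambda>p. Q p * Eu F p) p" using Eu_prE_eq_Eu_mult[OF F Q] by simp
  also have "\<dots> = lin_adjoint Q (Eu F) p + lin_adjoint (Eu F) Q p" using Eu_mult[OF Q2 EF] by simp
  finally show "prE Q (Eu F) p = lin_adjoint (Eu F) Q p" using Eu_prE_eq[OF F Q] by simp
qed

section \<open>Point symmetries and variational integrating factors\<close>

lemma pointfun_difffun_ord: "pointfun n f \<Longrightarrow> difffun_ord n 0 f"
  unfolding difffun_ord_def using pointfun_has_order difffun_smooth pointfun_def by blast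

lemma pointfun_pd_Uc: assumes "pointfun n f" "J \<noteq> {#}" shows "pd (Uc J) f = (\<lambda>p. 0)"
  using pd_Uc_beyond_order[OF pointfun_has_order[OF assms(1)]] assms(2) by (simp add: multi_indices_0)

lemma Dt_pointfun: assumes "pointfun n f"
  shows "Dt k f = (\<lambda>p. pd (Xc k) f p + p (Uc {#k#}) * pd (Uc {#}) f p)"
  using Dt_eq_sum[OF pointfun_has_order[OF assms] order_refl, of k] by (simp add: multi_indices_0)

lemma multi_indices_1: "multi_indices n 1 = insert {#} ((\<lambda>k. {#k#}) ` {..<n})"
proof (rule set_eqI, rule iffI)
  fix J assume J: "J \<in> multi_indices n 1"
  show "J \<in> insert {#} ((\<lambda>k. {#k#}) ` {..<n})"
  proof (cases "J = {#}")
    case False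
    then obtain k where k: "k \<in># J" by (meson multiset_nonemptyE)
    then have e: "J = add_mset k (J - {#k#})" by simp
    have "size J \<le> 1" using J by (simp add: multi_indices_def)
    moreover have "size J = Suc (size (J - {#k#}))" using e by (metis size_add_mset)
    ultimately have "J - {#k#} = {#}" by simp
    then have "J = {#k#}" using e by simp
    moreover have "k < n" using J k by (auto simp: multi_indices_def)
    ultimately show ?thesis by auto
  qed simp
next
  fix J assume "J \<in> insert {#} ((\<lambda>k. {#k#}) ` {..<n})"
  then show "J \<in> multi_indices n 1" by (auto simp: multi_indices_def)
qed

lemma DJ_single: "DJ {#k#} f = Dt k f" by (simp add: DJ_def)

lemma charac_eq: "charac n xi eta = (\<lambda>p. eta p - (\<Sum>i<n. xi i p * p (Uc {#i#})))"
  by (rule ext) (simp add: charac_def)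

context
  fixes n :: nat and xi :: "nat \<Rightarrow> jet \<Rightarrow> real" and eta :: "jet \<Rightarrow> real"
  assumes xi: "\<forall>i<n. pointfun n (xi i)" and eta: "pointfun n eta"
begin

lemma difffun_ord_xi: "i < n \<Longrightarrow> difffun_ord n N (xi i)"
  using xi pointfun_difffun_ord difffun_ord_mono by blast

lemma difffun_ord_eta: "difffun_ord n N eta"
  using eta pointfun_difffun_ord difffun_ord_mono by blast

lemma difffun_ord_charac: "1 \<le> N \<Longrightarrow> difffun_ord n N (charac n xi eta)"
  unfolding charac_eq
  by (intro difffun_ord_diff difffun_ord_eta difffun_ord_sum difffun_ord_mult difffun_ord_xi difffun_ord_coordU) (auto simp: multi_indices_def)

lemma pd_differentiable_xi_mult_u1: "i < n \<Longrightarrow> pd_differentiable (\<lambda>p. xi i p * p (Uc {#i#}))"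
  by (rule pd_differentiable_mult[OF difffun_ord_pd_differentiable[OF difffun_ord_xi] pd_differentiable_coord])

lemma pd_differentiable_xi_u1_sum: "pd_differentiable (\<lambda>p. \<Sum>i<n. xi i p * p (Uc {#i#}))"
  by (rule pd_differentiable_sum) (simp_all add: pd_differentiable_xi_mult_u1)

lemma pd_xi_u1_sum: "pd c (\<lambda>p. \<Sum>i<n. xi i p * p (Uc {#i#})) = (\<lambda>p. \<Sum>i<n. pd c (xi i) p * p (Uc {#i#}) + xi i p * (if c = Uc {#i#} then 1 else 0))"
proof -
  have "pd c (\<lambda>p. \<Sum>i<n. xi i p * p (Uc {#i#})) = (\<lambda>p. \<Sum>i<n. pd c (\<lambda>p. xi i p * p (Uc {#i#})) p)"
    by (rule pd_sum) (simp_all add: pd_differentiable_xi_mult_u1)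
  also have "\<dots> = (\<lambda>p. \<Sum>i<n. pd c (xi i) p * p (Uc {#i#}) + xi i p * (if c = Uc {#i#} then 1 else 0))"
    by (intro ext sum.cong refl) (simp add: pd_mult difffun_ord_pd_differentiable[OF difffun_ord_xi] pd_differentiable_coord pd_coord)
  finally show ?thesis .
qed

lemma pd_u_charac: "pd (Uc {#}) (charac n xi eta) = (\<lambda>p. pd (Uc {#}) eta p - (\<Sum>i<n. pd (Uc {#}) (xi i) p * p (Uc {#i#})))"
proof -
  have s: "pd_differentiable (\<lambda>p. \<Sum>i<n. xi i p * p (Uc {#i#}))"
    by (rule pd_differentiable_xi_u1_sum)
  show ?thesis unfolding charac_eq 
    apply (subst pd_diff[OF difffun_ord_pd_differentiable[OF difffun_ord_eta] s])
    apply (subst pd_xi_u1_sum)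
    apply (rule ext)
    apply (rule arg_cong[where f="\<lambda>x. _ - x"])
    by (rule sum.cong) auto
qed

lemma pd_u1_charac: assumes k: "k < n" shows "pd (Uc {#k#}) (charac n xi eta) = (\<lambda>p. - xi k p)"
proof -
  have s: "pd_differentiable (\<lambda>p. \<Sum>i<n. xi i p * p (Uc {#i#}))"
    by (rule pd_differentiable_xi_u1_sum)
  have z: "\<And>i. i < n \<Longrightarrow> pd (Uc {#k#}) (xi i) = (\<lambda>p. 0)"
    using xi pointfun_pd_Uc[of n _ "{#k#}"] by simp
  have ze: "pd (Uc {#k#}) eta = (\<lambda>p. 0)" using eta pointfun_pd_Uc[of n eta "{#k#}"] by simp
  have "\<And>p. (\<Sum>i<n. pd (Uc {#k#}) (xi i) p * p (Uc {#i#}) + xi i p * (if Uc {#k#} = Uc {#i#} then 1 else 0)) = xi k p"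
  proof -
    fix p
    have "(\<Sum>i<n. pd (Uc {#k#}) (xi i) p * p (Uc {#i#}) + xi i p * (if Uc {#k#} = Uc {#i#} then 1 else 0))
        = (\<Sum>i<n. if i = k then xi i p else 0)"
      by (rule sum.cong) (auto simp: z)
    then show "(\<Sum>i<n. pd (Uc {#k#}) (xi i) p * p (Uc {#i#}) + xi i p * (if Uc {#k#} = Uc {#i#} then 1 else 0)) = xi k p"
      using k by simp
  qed
  then show ?thesis unfolding charac_eq
    apply (subst pd_diff[OF difffun_ord_pd_differentiable[OF difffun_ord_eta] s])
    apply (subst pd_xi_u1_sum)
    by (simp add: ze)
qed

lemma lin_adjoint_charac: assumes G: "difffun_ord n N G" and N: "1 \<le> N"
  shows "lin_adjoint (charac n xi eta) G = (\<lambda>p. (pd (Uc {#}) eta p + (\<Sum>k<n. pd (Xc k) (xi k) p)) * G p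
             + (\<Sum>k<n. xi k p * Dt k G p))"
proof
  fix p
  define P where "P = charac n xi eta"
  have P1: "difffun_ord n 1 P" unfolding P_def by (rule difffun_ord_charac) simp
  have "lin_adjoint P G p = (\<Sum>J\<in>multi_indices n 1. (-1) ^ size J * DJ J (\<lambda>q. pd (Uc J) P q * G q) p)"
    using lin_adjoint_eq_sum[OF P1 order_refl] by simp
  also have "\<dots> = pd (Uc {#}) P p * G p + (\<Sum>k<n. - Dt k (\<lambda>q. pd (Uc {#k#}) P q * G q) p)"
  proof -
    define T where "T = (\<lambda>J. (-1) ^ size J * DJ J (\<lambda>q. pd (Uc J) P q * G q) p)"
    have "(\<Sum>J\<in>insert {#} ((\<lambda>k. {#k#}) ` {..<n}). T J) = T {#} + (\<Sum>J\<in>(\<lambda>k. {#k#}) ` {..<n}. T J)"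
      by (rule sum.insert) auto
    also have "(\<Sum>J\<in>(\<lambda>k. {#k#}) ` {..<n}. T J) = (\<Sum>k<n. T {#k#})"
      by (subst sum.reindex) (auto simp: inj_on_def)
    finally show ?thesis unfolding multi_indices_1 T_def by (simp add: DJ_single)
  qed
  also have "(\<Sum>k<n. - Dt k (\<lambda>q. pd (Uc {#k#}) P q * G q) p) = (\<Sum>k<n. Dt k (xi k) p * G p + xi k p * Dt k G p)"
  proof (rule sum.cong[OF refl])
    fix k assume "k \<in> {..<n}"
    then have k: "k < n" by simp
    have e: "(\<lambda>q. pd (Uc {#k#}) P q * G q) = (\<lambda>q. - (xi k q * G q))"
      unfolding P_def pd_u1_charac[OF k] by simp
    have "Dt k (\<lambda>q. - (xi k q * G q)) = (\<lambda>p. - Dt k (\<lambda>q. xi k q * G q) p)"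
      by (rule Dt_minus[OF difffun_ord_mult[OF difffun_ord_xi[OF k] G]])
    then show "- Dt k (\<lambda>q. pd (Uc {#k#}) P q * G q) p = Dt k (xi k) p * G p + xi k p * Dt k G p"
      unfolding e using Dt_mult[OF difffun_ord_xi[OF k] G, of k] by simp
  qed
  also have "\<dots> = (\<Sum>k<n. (pd (Xc k) (xi k) p + p (Uc {#k#}) * pd (Uc {#}) (xi k) p) * G p + xi k p * Dt k G p)"
    by (rule sum.cong[OF refl]) (use xi Dt_pointfun in auto)
  finally show "lin_adjoint (charac n xi eta) G p = (pd (Uc {#}) eta p + (\<Sum>k<n. pd (Xc k) (xi k) p)) * G p
             + (\<Sum>k<n. xi k p * Dt k G p)"
    unfolding P_def pd_u_charac
    by (simp add: sum.distrib sum_distrib_left sum_subtractf algebra_simps)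
qed

lemma Eu_prE_charac:
  assumes L: "difffun n L" and sym: "prX n xi eta (Eu L) = (\<lambda>p. fp p * Eu L p)"
  shows "Eu (prE (charac n xi eta) L)
    = (\<lambda>p. (fp p + pd (Uc {#}) eta p + (\<Sum>i<n. pd (Xc i) (xi i) p)) * Eu L p)"
proof
  fix p
  obtain N where dL: "difffun_ord n (Suc N) L"
    using L difffun_iff_difffun_ord difffun_ord_mono le_SucI by blast
  define P where "P = charac n xi eta"
  define G where "G = Eu L"
  have dP: "difffun_ord n (Suc N) P" unfolding P_def by (rule difffun_ord_charac) simp
  have dG: "difffun_ord n (Suc N + Suc N) G" unfolding G_def by (rule difffun_ord_Eu[OF dL])
  have "prE P G p + (\<Sum>i<n. xi i p * Dt i G p) = fp p * G p"
    using fun_cong[OF sym, of p] unfolding prX_def P_def G_def by simp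
  moreover have "Eu (prE P L) p = prE P G p + lin_adjoint P G p"
    using Eu_prE_eq[OF dL dP] unfolding G_def by simp
  moreover have "lin_adjoint P G p
      = (pd (Uc {#}) eta p + (\<Sum>k<n. pd (Xc k) (xi k) p)) * G p + (\<Sum>k<n. xi k p * Dt k G p)"
    unfolding P_def using lin_adjoint_charac[OF dG] by simp
  ultimately show "Eu (prE P L) p = (fp p + pd (Uc {#}) eta p + (\<Sum>i<n. pd (Xc i) (xi i) p)) * G p"
    by (simp add: algebra_simps)
qed

end

lemma DJ_mult_DJ_vanish: assumes "\<forall>J. valid_mi n J \<longrightarrow> DJ J G p = 0" "difffun_ord n N G"
  shows "valid_mi n M \<Longrightarrow> valid_mi n A \<Longrightarrow> difffun_ord n K X \<Longrightarrow> DJ M (\<lambda>q. DJ A G q * X q) p = 0"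
proof (induction M arbitrary: A K X)
  case empty then show ?case using assms(1) by simp
next
  case (add x M)
  have v: "valid_mi n M" "x < n" using add.prems by (auto simp: valid_mi_def)
  have vA: "valid_mi n (add_mset x A)" using add.prems v by (auto simp: valid_mi_def)
  define L where "L = N + size A + K"
  have a: "difffun_ord n L (DJ A G)" unfolding L_def by (rule difffun_ord_mono[OF difffun_ord_DJ[OF add.prems(2) assms(2)]]) simp
  have b: "difffun_ord n L X" unfolding L_def by (rule difffun_ord_mono[OF add.prems(3)]) simp
  have c: "difffun_ord n (Suc L) (DJ (add_mset x A) G)" unfolding L_def
    by (rule difffun_ord_mono[OF difffun_ord_DJ[OF vA assms(2)]]) simp
  have d: "difffun_ord n (Suc L) X" by (rule difffun_ord_mono[OF b]) simp
  have "DJ (add_mset x M) (\<lambda>q. DJ A G q * X q) = DJ M (Dt x (\<lambda>q. DJ A G q * X q))"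
    by (rule DJ_add_mset_Dt[OF v difffun_ord_mult[OF a b]])
  also have "\<dots> = DJ M (\<lambda>q. DJ (add_mset x A) G q * X q + DJ A G q * Dt x X q)"
    using Dt_mult[OF a b, of x] DJ_add_mset[OF add.prems(2) v(2) assms(2)] by simp
  also have "\<dots> = (\<lambda>q. DJ M (\<lambda>q. DJ (add_mset x A) G q * X q) q + DJ M (\<lambda>q. DJ A G q * Dt x X q) q)"
    by (rule DJ_add[OF v(1) difffun_ord_mult[OF c d] difffun_ord_mult[OF difffun_ord_mono[OF a] difffun_ord_Dt[OF b v(2)]]]) simp
  finally show ?case using add.IH[OF v(1) vA d] add.IH[OF v(1) add.prems(2) difffun_ord_Dt[OF b v(2)]] by simp
qed

lemma DJ_mult_vanish: assumes "\<forall>J. valid_mi n J \<longrightarrow> DJ J G p = 0" "difffun_ord n N G" "valid_mi n M" "difffun_ord n K X"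
  shows "DJ M (\<lambda>q. G q * X q) p = 0"
  using DJ_mult_DJ_vanish[OF assms(1,2,3), of "{#}"] assms(4) by (simp add: valid_mi_def)

lemma prE_mult: assumes a: "difffun_ord n N a" and b: "difffun_ord n N b"
  shows "prE Q (\<lambda>p. a p * b p) = (\<lambda>p. prE Q a p * b p + a p * prE Q b p)"
  unfolding prE_eq_sum[OF difffun_ord_mult[OF a b] order_refl] prE_eq_sum[OF a order_refl]
    prE_eq_sum[OF b order_refl]
  by (simp add: pd_mult difffun_ord_pd_differentiable[OF a] difffun_ord_pd_differentiable[OF b]
      sum.distrib sum_distrib_left sum_distrib_right algebra_simps)

lemma lin_adjoint_mult_on_solution:
  assumes G: "difffun_ord n N G" and W: "difffun_ord n N W" and Q: "difffun_ord n N Q"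
    and sol: "\<forall>J. valid_mi n J \<longrightarrow> DJ J G p = 0"
  shows "lin_adjoint (\<lambda>q. W q * G q) Q p = lin_adjoint G (\<lambda>q. W q * Q q) p"
proof -
  have WG: "difffun_ord n N (\<lambda>q. W q * G q)" by (rule difffun_ord_mult[OF W G])
  have "(-1) ^ size J * DJ J (\<lambda>q. pd (Uc J) (\<lambda>q. W q * G q) q * Q q) p
      = (-1) ^ size J * DJ J (\<lambda>q. pd (Uc J) G q * (W q * Q q)) p"
    if J: "J \<in> multi_indices n N" for J
  proof -
    have v: "valid_mi n J" by (rule multi_indices_valid[OF J])
    have e: "(\<lambda>q. pd (Uc J) (\<lambda>q. W q * G q) q * Q q)
        = (\<lambda>q. G q * (pd (Uc J) W q * Q q) + pd (Uc J) G q * (W q * Q q))"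
      by (simp add: pd_mult difffun_ord_pd_differentiable[OF W] difffun_ord_pd_differentiable[OF G]
          algebra_simps)
    have "DJ J (\<lambda>q. G q * (pd (Uc J) W q * Q q)) p = 0"
      by (rule DJ_mult_vanish[OF sol G v difffun_ord_mult[OF difffun_ord_pd[OF W] Q]])
    then show ?thesis
      unfolding e DJ_add[OF v difffun_ord_mult[OF G difffun_ord_mult[OF difffun_ord_pd[OF W] Q]]
          difffun_ord_mult[OF difffun_ord_pd[OF G] difffun_ord_mult[OF W Q]]]
      by simp
  qed
  then show ?thesis
    unfolding lin_adjoint_eq_sum[OF WG order_refl] lin_adjoint_eq_sum[OF G order_refl]
    by (intro sum.cong) auto
qed

lemma difffun_common_order:
  assumes "difffun n f" "difffun n g"
  obtains N where "difffun_ord n N f" "difffun_ord n N g"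
proof -
  obtain M K where "difffun_ord n M f" "difffun_ord n K g"
    using assms difffun_iff_difffun_ord by blast
  then show thesis using that difffun_ord_mono[of n M f "M + K"] difffun_ord_mono[of n K g "M + K"]
    by simp
qed

text \<open>On solutions, by the Helmholtz conditions for G and for W G:
  G'(W Q) = G'^*(W Q) = (W G)'^*(Q) = (W G)'(Q) = W G'(Q).\<close>

lemma var_int_factor_recursion:
  assumes L: "difffun n L" and Lt: "difffun n Lt" and W: "difffun n W"
    and WG: "(\<lambda>p. W p * Eu L p) = Eu Lt" and sym: "evsym n (Eu L) Q"
  shows "evsym n (Eu L) (\<lambda>p. W p * Q p)"
proof -
  obtain N1 where dL: "difffun_ord n N1 L" and dLt: "difffun_ord n N1 Lt"
    using difffun_common_order[OF L Lt] .
  obtain N2 where dW: "difffun_ord n N2 W" and dQ: "difffun_ord n N2 Q"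
    using difffun_common_order[OF W] sym unfolding evsym_def by blast
  define N where "N = N1 + N1 + N2"
  have dL: "difffun_ord n N L" and dLt: "difffun_ord n N Lt" and dW: "difffun_ord n N W"
    and dQ: "difffun_ord n N Q" and dG: "difffun_ord n N (Eu L)"
    using dL dLt dW dQ difffun_ord_Eu[OF dL] unfolding N_def by (auto elim: difffun_ord_mono)
  have "prE (\<lambda>p. W p * Q p) (Eu L) p = 0" if sol: "\<forall>J. valid_mi n J \<longrightarrow> DJ J (Eu L) p = 0" for p
  proof -
    have "prE (\<lambda>p. W p * Q p) (Eu L) p = lin_adjoint (Eu L) (\<lambda>p. W p * Q p) p"
      using helmholtz_self_adjoint[OF dL difffun_ord_mult[OF dW dQ]] by simp
    also have "\<dots> = lin_adjoint (\<lambda>p. W p * Eu L p) Q p"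
      by (rule lin_adjoint_mult_on_solution[OF dG dW dQ sol, symmetric])
    also have "\<dots> = prE Q (\<lambda>p. W p * Eu L p) p"
      unfolding WG using helmholtz_self_adjoint[OF dLt dQ] by simp
    also have "\<dots> = W p * prE Q (Eu L) p"
      using prE_mult[OF dW dG] sol[rule_format, of "{#}"] by (simp add: valid_mi_def)
    finally show ?thesis using sym sol unfolding evsym_def by simp
  qed
  then show ?thesis
    using difffun_ord_mult[OF dW dQ] difffun_iff_difffun_ord unfolding evsym_def by blast
qed

theorem proposition3p5:
  fixes n :: nat and L :: "jet \<Rightarrow> real" and xi :: "nat \<Rightarrow> jet \<Rightarrow> real"
    and eta fp :: "jet \<Rightarrow> real"
  assumes L: "difffun n L"
    and xi: "\<forall>i<n. pointfun n (xi i)"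
    and eta: "pointfun n eta"
    and fp: "difffun n fp"
    and sym: "prX n xi eta (Eu L) = (\<lambda>p. fp p * Eu L p)"
    and nonvar: "Eu (\<lambda>p. charac n xi eta p * Eu L p) \<noteq> (\<lambda>p. 0)"
  defines "W \<equiv> (\<lambda>p. fp p + pd (Uc {#}) eta p + (\<Sum>i<n. pd (Xc i) (xi i) p))"
  shows "(\<lambda>p. W p * Eu L p) = Eu (prE (charac n xi eta) L)
       \<and> Eu (prE (charac n xi eta) L) = Eu (\<lambda>p. charac n xi eta p * Eu L p)
       \<and> W \<noteq> (\<lambda>p. 0)
       \<and> var_int_factor n W (Eu L)
       \<and> ((\<exists>p q. W p \<noteq> W q) \<longrightarrow>
            (\<forall>P. evsym n (Eu L) P \<longrightarrow> evsym n (Eu L) (\<lambda>p. W p * P p)))"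
proof -
  let ?P = "charac n xi eta"
  obtain N where dL: "difffun_ord n N L" and dfp: "difffun_ord n N fp"
    using difffun_common_order[OF L fp] .
  have WG: "(\<lambda>p. W p * Eu L p) = Eu (prE ?P L)"
    unfolding W_def Eu_prE_charac[OF xi eta L sym] ..
  have IBP: "Eu (prE ?P L) = Eu (\<lambda>p. ?P p * Eu L p)"
    using Eu_prE_eq_Eu_mult[OF difffun_ord_mono[OF dL, of "Suc N"] difffun_ord_charac[OF xi eta]] by simp
  have W0: "W \<noteq> (\<lambda>p. 0)" using WG IBP nonvar by auto
  have "difffun_ord n N W" unfolding W_def
    by (intro difffun_ord_add dfp difffun_ord_pd difffun_ord_eta[OF xi eta] difffun_ord_sum
        finite_lessThan difffun_ord_xi[OF xi eta]) simp
  then have dW: "difffun n W" using difffun_iff_difffun_ord by blast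
  have dLt: "difffun n (prE ?P L)"
    using difffun_ord_prE[OF dL difffun_ord_charac[OF xi eta, of 1]] difffun_iff_difffun_ord by blast
  have "var_int_factor n W (Eu L)" unfolding var_int_factor_def using dW W0 WG dLt by blast
  \<comment> \<open>the recursion property holds for every W; non-constancy only makes it non-trivial\<close>
  then show ?thesis using WG IBP W0 var_int_factor_recursion[OF L dLt dW WG] by blast
qed

end
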